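(* For each $n\in\mathbb{N}$ and $r\in(0,+\infty]$, the continuous $\mathcal{O}(\mathbb{C}^\times)$-algebra homomorphism $\mathcal{O}_{\mathrm{def}}(\mathbb{D}_r^n)\to\mathcal{O}^T_{\mathrm{def}}(\mathbb{D}_r^n)$ induced by the inclusion $\mathcal{F}(\mathbb{D}_r^n)\subset\mathcal{F}^T(\mathbb{D}_r^n)$ (sending the class of $\zeta_i$ to the class of $\zeta_i$ and $z$ to $z$) is a topological isomorphism.
   Context: $\mathbb{C}^\times=\mathbb{C}\setminus\{0\}$; $\mathcal{O}(\mathbb{C}^\times)$ holomorphic functions on $\mathbb{C}^\times$, coordinate $z$. $W_n$: finite words $\alpha$ over $\{1,\dots,n\}$, length $|\alpha|$; $s(\alpha)$ is the number of $i$ with $\alpha_i\ne\alpha_{i+1}$ ($s(\alpha)=|\alpha|-1$ if $|\alpha|\le1$). $\mathcal{F}^T(\mathbb{D}_r^n)$: Fréchet algebra of series $\sum_\alpha c_\alpha\zeta_\alpha$ with $\sum|c_\alpha|\rho^{|\alpha|}<\infty$ for all $\rho\in(0,r)$; $\mathcal{F}(\mathbb{D}_r^n)$: those with $\sum|c_\alpha|\rho^{|\alpha|}\tau^{s(\alpha)+1}<\infty$ for all $\rho\in(0,r)$, $\tau\ge1$; both with concatenation product and topology from these norms (so $\mathcal{F}(\mathbb{D}_r^n)\subset\mathcal{F}^T(\mathbb{D}_r^n)$ continuously). For such $F$, $\mathcal{O}(\mathbb{C}^\times,F)\cong\mathcal{O}(\mathbb{C}^\times)\widehat\otimes F$; $\mathcal{O}_{\mathrm{def}}(\mathbb{D}_r^n)$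 and $\mathcal{O}^T_{\mathrm{def}}(\mathbb{D}_r^n)$ are the quotients of $\mathcal{O}(\mathbb{C}^\times,\mathcal{F}(\mathbb{D}_r^n))$ and $\mathcal{O}(\mathbb{C}^\times,\mathcal{F}^T(\mathbb{D}_r^n))$ by the closed two-sided ideals generated by $\zeta_i\zeta_j-z\zeta_j\zeta_i$ ($i<j$). *)

theory Defs
  imports "HOL-Analysis.Analysis" "HOL-Library.Function_Algebras"
begin

text \<open>Elements of O(C^x, F) for F = F(D_r^n) or F^T(D_r^n) are represented by their
  (Laurent x noncommutative power series) coefficient families
  c k alpha = coefficient of z^k zeta_alpha, k an integer, alpha a word over {1..n}.\<close>

type_synonym coeffs = "int \<Rightarrow> nat list \<Rightarrow> complex"

definition words :: "nat \<Rightarrow> nat list set" where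
  "words n = {\<alpha>. set \<alpha> \<subseteq> {1..n}}"

definition switches :: "nat list \<Rightarrow> int" where
  "switches \<alpha> = (if length \<alpha> \<le> 1 then int (length \<alpha>) - 1
     else int (card {i. Suc i < length \<alpha> \<and> \<alpha> ! i \<noteq> \<alpha> ! Suc i}))"

text \<open>The factor R^|k| (for all R \<ge> 1) encodes holomorphy on C^x, i.e. convergence of the
  Laurent series in z on every annulus.\<close>
definition wF :: "real \<Rightarrow> real \<Rightarrow> real \<Rightarrow> int \<Rightarrow> nat list \<Rightarrow> real" where
  "wF \<rho> \<tau> R k \<alpha> = \<rho> ^ length \<alpha> * \<tau> powr (of_int (switches \<alpha> + 1)) * R ^ nat \<bar>k\<bar>"

definition wT :: "real \<Rightarrow> real \<Rightarrow> int \<Rightarrow> nat list \<Rightarrow> real" where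
  "wT \<rho> R k \<alpha> = \<rho> ^ length \<alpha> * R ^ nat \<bar>k\<bar>"

definition wnorm :: "(int \<Rightarrow> nat list \<Rightarrow> real) \<Rightarrow> coeffs \<Rightarrow> real" where
  "wnorm w c = (\<Sum>\<^sub>\<infinity>(k, \<alpha>)\<in>UNIV. norm (c k \<alpha>) * w k \<alpha>)"

definition normsF :: "ereal \<Rightarrow> (coeffs \<Rightarrow> real) set" where
  "normsF r = {wnorm (wF \<rho> \<tau> R) | \<rho> \<tau> R. 0 < \<rho> \<and> ereal \<rho> < r \<and> 1 \<le> \<tau> \<and> 1 \<le> R}"

definition normsT :: "ereal \<Rightarrow> (coeffs \<Rightarrow> real) set" where
  "normsT r = {wnorm (wT \<rho> R) | \<rho> R. 0 < \<rho> \<and> ereal \<rho> < r \<and> 1 \<le> R}"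

definition OF_alg :: "nat \<Rightarrow> ereal \<Rightarrow> coeffs set" where
  "OF_alg n r = {c. (\<forall>k \<alpha>. \<alpha> \<notin> words n \<longrightarrow> c k \<alpha> = 0) \<and>
     (\<forall>\<rho> \<tau> R. 0 < \<rho> \<and> ereal \<rho> < r \<and> 1 \<le> \<tau> \<and> 1 \<le> R \<longrightarrow>
        (\<lambda>(k, \<alpha>). norm (c k \<alpha>) * wF \<rho> \<tau> R k \<alpha>) summable_on UNIV)}"

definition OT_alg :: "nat \<Rightarrow> ereal \<Rightarrow> coeffs set" where
  "OT_alg n r = {c. (\<forall>k \<alpha>. \<alpha> \<notin> words n \<longrightarrow> c k \<alpha> = 0) \<and>
     (\<forall>\<rho> R. 0 < \<rho> \<and> ereal \<rho> < r \<and> 1 \<le> R \<longrightarrow>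
        (\<lambda>(k, \<alpha>). norm (c k \<alpha>) * wT \<rho> R k \<alpha>) summable_on UNIV)}"

text \<open>Product: pointwise product in z (Cauchy product of Laurent series) combined with
  concatenation of words.\<close>
definition cmul :: "coeffs \<Rightarrow> coeffs \<Rightarrow> coeffs" where
  "cmul c d k \<gamma> = (\<Sum>\<^sub>\<infinity>j\<in>UNIV. \<Sum>i\<le>length \<gamma>. c j (take i \<gamma>) * d (k - j) (drop i \<gamma>))"

definition zeta :: "nat \<Rightarrow> coeffs" where
  "zeta i = (\<lambda>k \<alpha>. if k = 0 \<and> \<alpha> = [i] then 1 else 0)"

definition zvar :: coeffs where
  "zvar = (\<lambda>k \<alpha>. if k = 1 \<and> \<alpha> = [] then 1 else 0)"

definition relations :: "nat \<Rightarrow> coeffs set" where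
  "relations n = {cmul (zeta i) (zeta j) - cmul zvar (cmul (zeta j) (zeta i)) | i j.
                    1 \<le> i \<and> i < j \<and> j \<le> n}"

definition seminorm_topology :: "coeffs set \<Rightarrow> (coeffs \<Rightarrow> real) set \<Rightarrow> coeffs topology" where
  "seminorm_topology A P = subtopology (topology_generated_by
      {{y \<in> A. p (y - x) < \<epsilon>} | p x \<epsilon>. p \<in> P \<and> x \<in> A \<and> 0 < \<epsilon>}) A"

definition two_sided_ideal :: "coeffs set \<Rightarrow> coeffs set \<Rightarrow> bool" where
  "two_sided_ideal A I \<longleftrightarrow> I \<subseteq> A \<and> 0 \<in> I \<and> (\<forall>x\<in>I. \<forall>y\<in>I. x + y \<in> I) \<and>
     (\<forall>a\<in>A. \<forall>x\<in>I. cmul a x \<in> I \<and> cmul x a \<in> I)"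

definition closed_ideal_gen :: "coeffs set \<Rightarrow> coeffs topology \<Rightarrow> coeffs set \<Rightarrow> coeffs set" where
  "closed_ideal_gen A X S = \<Inter>{I. S \<subseteq> I \<and> two_sided_ideal A I \<and> closedin X I}"

definition coset :: "coeffs set \<Rightarrow> coeffs set \<Rightarrow> coeffs \<Rightarrow> coeffs set" where
  "coset A I x = {y \<in> A. y - x \<in> I}"

definition quotient_set :: "coeffs set \<Rightarrow> coeffs set \<Rightarrow> coeffs set set" where
  "quotient_set A I = coset A I ` A"

definition quotient_top :: "coeffs set \<Rightarrow> coeffs topology \<Rightarrow> coeffs set \<Rightarrow> coeffs set topology" where
  "quotient_top A X I = subtopology (topology_generated_by
      {U. U \<subseteq> quotient_set A I \<and> openin X (\<Union>U)}) (quotient_set A I)"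

definition XF :: "nat \<Rightarrow> ereal \<Rightarrow> coeffs topology" where
  "XF n r = seminorm_topology (OF_alg n r) (normsF r)"
definition XT :: "nat \<Rightarrow> ereal \<Rightarrow> coeffs topology" where
  "XT n r = seminorm_topology (OT_alg n r) (normsT r)"

definition IF :: "nat \<Rightarrow> ereal \<Rightarrow> coeffs set" where
  "IF n r = closed_ideal_gen (OF_alg n r) (XF n r) (relations n)"
definition IT :: "nat \<Rightarrow> ereal \<Rightarrow> coeffs set" where
  "IT n r = closed_ideal_gen (OT_alg n r) (XT n r) (relations n)"

definition Odef :: "nat \<Rightarrow> ereal \<Rightarrow> coeffs set topology" where
  "Odef n r = quotient_top (OF_alg n r) (XF n r) (IF n r)"
definition OdefT :: "nat \<Rightarrow> ereal \<Rightarrow> coeffs set topology" where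
  "OdefT n r = quotient_top (OT_alg n r) (XT n r) (IT n r)"

text \<open>The map induced by the inclusion F \<subseteq> F^T: class of x \<mapsto> class of x.\<close>
definition induced_map :: "nat \<Rightarrow> ereal \<Rightarrow> coeffs set \<Rightarrow> coeffs set" where
  "induced_map n r C = {y \<in> OT_alg n r. \<exists>x\<in>C. y - x \<in> IT n r}"

end

theory Submission
  imports Defs
begin

text \<open>
  Both algebras are weighted \<open>\<ell>\<^sup>1\<close> spaces of coefficient families indexed by \<open>(k, \<alpha>)\<close>, the
  coefficient of \<open>z\<^sup>k \<zeta>\<^sub>\<alpha>\<close>; the weights of \<open>\<F>\<close> carry the extra factor \<open>\<tau>\<^bsup>s(\<alpha>)+1\<^esup>\<close>.
  Modulo the relations, \<open>z\<^sup>k \<zeta>\<^sub>\<beta>\<close> only depends on the letters of \<open>\<beta>\<close> and on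
  \<open>k - inv(\<beta>)\<close>, where \<open>inv\<close> counts inversions. Every word can be rearranged into a canonical
  word with the same letters and the same number of inversions but at most \<open>4n\<close> switches.
  Collecting coefficients along this rearrangement gives a continuous map \<open>\<Phi> = reorder\<close> from the
  \<open>\<F>\<^sup>T\<close>-algebra to the \<open>\<F>\<close>-algebra with \<open>c - \<Phi> c\<close> in the closed ideal, so
  \<open>[c] \<mapsto> [\<Phi> c]\<close> inverts the induced map. For injectivity, the elements \<open>c\<close> with
  \<open>\<Phi>(\<zeta>\<^sub>u c \<zeta>\<^sub>v) \<in> I\<^sub>F\<close> for all words \<open>u, v\<close> form a closed ideal containing the relations,
  hence containing \<open>I\<^sub>T\<close>.
\<close>

section \<open>Topologies defined by families of seminorms\<close>

definition semiball :: "coeffs set \<Rightarrow> (coeffs \<Rightarrow> real) \<Rightarrow> coeffs \<Rightarrow> real \<Rightarrow> coeffs set" where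
  "semiball A p x e = {y \<in> A. p (y - x) < e}"

definition seminorm_family :: "coeffs set \<Rightarrow> (coeffs \<Rightarrow> real) set \<Rightarrow> bool" where
  "seminorm_family A P \<longleftrightarrow> P \<noteq> {} \<and> (\<forall>x\<in>A. \<forall>y\<in>A. x - y \<in> A) \<and>
     (\<forall>p\<in>P. \<forall>q\<in>P. \<exists>s\<in>P. \<forall>x\<in>A. p x \<le> s x \<and> q x \<le> s x) \<and>
     (\<forall>p\<in>P. p 0 = 0 \<and> (\<forall>x\<in>A. 0 \<le> p x) \<and> (\<forall>x\<in>A. \<forall>y\<in>A. p (x - y) = p (y - x)) \<and>
        (\<forall>x\<in>A. \<forall>y\<in>A. \<forall>z\<in>A. p (x - z) \<le> p (x - y) + p (y - z)))"

lemma seminorm_familyD: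
  assumes "seminorm_family A P"
  shows "P \<noteq> {}" "\<And>x y. x \<in> A \<Longrightarrow> y \<in> A \<Longrightarrow> x - y \<in> A"
    "\<And>p q. p \<in> P \<Longrightarrow> q \<in> P \<Longrightarrow> \<exists>s\<in>P. \<forall>x\<in>A. p x \<le> s x \<and> q x \<le> s x"
    "\<And>p. p \<in> P \<Longrightarrow> p 0 = 0"
    "\<And>p x y. p \<in> P \<Longrightarrow> x \<in> A \<Longrightarrow> y \<in> A \<Longrightarrow> p (x - y) = p (y - x)"
    "\<And>p x y z. p \<in> P \<Longrightarrow> x \<in> A \<Longrightarrow> y \<in> A \<Longrightarrow> z \<in> A \<Longrightarrow> p (x - z) \<le> p (x - y) + p (y - z)"
  using assms unfolding seminorm_family_def by blast+

lemma generate_topology_on_semiballs: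
  assumes P: "seminorm_family A P"
    and "generate_topology_on {{y \<in> A. p (y - x) < \<epsilon>} | p x \<epsilon>. p \<in> P \<and> x \<in> A \<and> 0 < \<epsilon>} T"
  shows "\<forall>x\<in>T \<inter> A. \<exists>p\<in>P. \<exists>e>0. semiball A p x e \<subseteq> T"
  using assms(2)
proof (induction rule: generate_topology_on.induct)
  case (Int a b)
  show ?case
  proof
    fix x assume x: "x \<in> a \<inter> b \<inter> A"
    from Int.IH(1) x obtain p e where p: "p \<in> P" "e > 0" "semiball A p x e \<subseteq> a" by blast
    from Int.IH(2) x obtain q d where q: "q \<in> P" "d > 0" "semiball A q x d \<subseteq> b" by blast
    obtain s where s: "s \<in> P" "\<forall>z\<in>A. p z \<le> s z \<and> q z \<le> s z"
      using seminorm_familyD(3)[OF P p(1) q(1)] by blast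
    have "semiball A s x (min e d) \<subseteq> semiball A p x e \<inter> semiball A q x d"
      using s(2) x seminorm_familyD(2)[OF P] by (fastforce simp: semiball_def)
    then show "\<exists>p\<in>P. \<exists>e>0. semiball A p x e \<subseteq> a \<inter> b"
      using s(1) p q by (intro bexI[of _ s] exI[of _ "min e d"]) auto
  qed
next
  case (UN K)
  then show ?case by blast
next
  case (Basis s)
  then obtain p x0 \<epsilon> where s: "s = {y \<in> A. p (y - x0) < \<epsilon>}" "p \<in> P" "x0 \<in> A" by blast
  show ?case
  proof
    fix x assume x: "x \<in> s \<inter> A"
    have "semiball A p x (\<epsilon> - p (x - x0)) \<subseteq> s"
      using seminorm_familyD(6)[OF P s(2) _ _ s(3)] x by (fastforce simp: semiball_def s(1))
    then show "\<exists>p\<in>P. \<exists>e>0. semiball A p x e \<subseteq> s"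
      using s x by (intro bexI[of _ p] exI[of _ "\<epsilon> - p (x - x0)"]) auto
  qed
qed simp

lemma openin_seminorm_topology:
  assumes P: "seminorm_family A P"
  shows "openin (seminorm_topology A P) U \<longleftrightarrow> U \<subseteq> A \<and> (\<forall>x\<in>U. \<exists>p\<in>P. \<exists>e>0. semiball A p x e \<subseteq> U)"
proof -
  define S where "S = {{y \<in> A. p (y - x) < \<epsilon>} | p x \<epsilon>. p \<in> P \<and> x \<in> A \<and> 0 < \<epsilon>}"
  have open_iff: "openin (seminorm_topology A P) U \<longleftrightarrow> (\<exists>T. generate_topology_on S T \<and> U = T \<inter> A)"
    unfolding seminorm_topology_def openin_subtopology openin_topology_generated_by_iff S_def by blast
  show ?thesis
  proof
    assume "openin (seminorm_topology A P) U"
    then obtain T where "generate_topology_on S T" "U = T \<inter> A" using open_iff by blast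
    with generate_topology_on_semiballs[OF P] show "U \<subseteq> A \<and> (\<forall>x\<in>U. \<exists>p\<in>P. \<exists>e>0. semiball A p x e \<subseteq> U)"
      unfolding S_def semiball_def by blast
  next
    assume U: "U \<subseteq> A \<and> (\<forall>x\<in>U. \<exists>p\<in>P. \<exists>e>0. semiball A p x e \<subseteq> U)"
    define K where "K = {b \<in> S. b \<subseteq> U}"
    have "generate_topology_on S (\<Union>K)"
      by (rule generate_topology_on.UN) (auto simp: K_def intro: generate_topology_on.Basis)
    moreover have "U \<subseteq> \<Union>K"
    proof
      fix x assume x: "x \<in> U"
      with U obtain p e where pe: "p \<in> P" "e > 0" "semiball A p x e \<subseteq> U" by blast
      then have "x \<in> semiball A p x e" using x U seminorm_familyD(4)[OF P pe(1)] by (auto simp: semiball_def)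
      moreover have "semiball A p x e \<in> K" using pe x U unfolding K_def S_def semiball_def by blast
      ultimately show "x \<in> \<Union>K" by blast
    qed
    moreover have "\<Union>K \<subseteq> U" by (auto simp: K_def)
    ultimately show "openin (seminorm_topology A P) U" using U open_iff by blast
  qed
qed

lemma topspace_seminorm_topology:
  assumes P: "seminorm_family A P"
  shows "topspace (seminorm_topology A P) = A"
proof -
  obtain p where "p \<in> P" using seminorm_familyD(1)[OF P] by blast
  then have "\<exists>p\<in>P. \<exists>e>0. semiball A p x e \<subseteq> A" for x
    by (intro bexI[of _ p] exI[of _ "1::real"]) (auto simp: semiball_def)
  then have "openin (seminorm_topology A P) A" by (simp add: openin_seminorm_topology[OF P])
  then have "A \<subseteq> topspace (seminorm_topology A P)" by (rule openin_subset)
  moreover have "topspace (seminorm_topology A P) \<subseteq> A" unfolding seminorm_topology_def by simp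
  ultimately show ?thesis by blast
qed

lemma mem_closedin_seminorm_topology:
  assumes P: "seminorm_family A P" and I: "closedin (seminorm_topology A P) I" and x: "x \<in> A"
    and approx: "\<And>p e. p \<in> P \<Longrightarrow> e > 0 \<Longrightarrow> \<exists>y\<in>I. p (x - y) < e"
  shows "x \<in> I"
proof (rule ccontr)
  assume "x \<notin> I"
  have IA: "I \<subseteq> A" using closedin_subset[OF I] topspace_seminorm_topology[OF P] by simp
  have "openin (seminorm_topology A P) (A - I)"
    using I topspace_seminorm_topology[OF P] by (simp add: closedin_def)
  then have "\<forall>x\<in>A - I. \<exists>p\<in>P. \<exists>e>0. semiball A p x e \<subseteq> A - I"
    by (simp add: openin_seminorm_topology[OF P])
  then obtain p e where pe: "p \<in> P" "e > 0" "semiball A p x e \<subseteq> A - I"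
    using x \<open>x \<notin> I\<close> by blast
  from approx[OF pe(1,2)] obtain y where y: "y \<in> I" "p (x - y) < e" by blast
  then have "y \<in> semiball A p x e"
    using seminorm_familyD(5)[OF P pe(1) x] IA by (auto simp: semiball_def)
  then show False using pe y by blast
qed

lemma continuous_map_seminorm_topology:
  assumes P: "seminorm_family A P" and Q: "seminorm_family B Q"
    and f: "\<And>x. x \<in> A \<Longrightarrow> f x \<in> B"
    and additive: "\<And>x y. x \<in> A \<Longrightarrow> y \<in> A \<Longrightarrow> f y - f x = f (y - x)"
    and bounded: "\<And>q. q \<in> Q \<Longrightarrow> \<exists>p\<in>P. \<exists>C>0. \<forall>z\<in>A. q (f z) \<le> C * p z"
  shows "continuous_map (seminorm_topology A P) (seminorm_topology B Q) f"
  unfolding continuous_map topspace_seminorm_topology[OF P] topspace_seminorm_topology[OF Q]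
proof (intro conjI allI impI)
  show "f ` A \<subseteq> B" using f by blast
  fix U assume "openin (seminorm_topology B Q) U"
  then have U: "\<forall>x\<in>U. \<exists>q\<in>Q. \<exists>e>0. semiball B q x e \<subseteq> U"
    using openin_seminorm_topology[OF Q] by auto
  show "openin (seminorm_topology A P) {x \<in> A. f x \<in> U}"
    unfolding openin_seminorm_topology[OF P]
  proof (intro conjI ballI)
    fix x assume x: "x \<in> {x \<in> A. f x \<in> U}"
    then obtain q e where qe: "q \<in> Q" "e > 0" "semiball B q (f x) e \<subseteq> U" using U by blast
    obtain p C where pC: "p \<in> P" "C > 0" "\<forall>z\<in>A. q (f z) \<le> C * p z" using bounded[OF qe(1)] by blast
    have "f y \<in> semiball B q (f x) e" if y: "y \<in> semiball A p x (e / C)" for y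
    proof -
      have yA: "y \<in> A" "y - x \<in> A" using y x seminorm_familyD(2)[OF P] by (auto simp: semiball_def)
      have "q (f y - f x) \<le> C * p (y - x)" using pC(3) yA x additive by simp
      also have "\<dots> < e" using y pC(2) by (simp add: semiball_def pos_less_divide_eq mult.commute)
      finally show ?thesis using f yA by (simp add: semiball_def)
    qed
    then show "\<exists>p\<in>P. \<exists>e>0. semiball A p x e \<subseteq> {x \<in> A. f x \<in> U}"
      using pC qe by (intro bexI[of _ p] exI[of _ "e / C"]) (auto simp: semiball_def)
  qed blast
qed

lemma closedin_Inter_preimages:
  assumes f: "\<And>i. i \<in> S \<Longrightarrow> continuous_map X Y (f i)" and C: "closedin Y C"
  shows "closedin X {x \<in> topspace X. \<forall>i\<in>S. f i x \<in> C}"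
proof (cases "S = {}")
  case False
  have "{x \<in> topspace X. \<forall>i\<in>S. f i x \<in> C} = (\<Inter>i\<in>S. {x \<in> topspace X. f i x \<in> C})"
    using False by auto
  also have "closedin X \<dots>"
    using False closedin_continuous_map_preimage[OF f C] by (intro closedin_Inter) auto
  finally show ?thesis .
qed simp

section \<open>Quotients by additive subgroups\<close>

definition add_subgroup :: "'a::ab_group_add set \<Rightarrow> bool" where
  "add_subgroup I \<longleftrightarrow> 0 \<in> I \<and> (\<forall>x\<in>I. \<forall>y\<in>I. x - y \<in> I)"

lemma add_subgroupD:
  assumes "add_subgroup I"
  shows "0 \<in> I" "\<And>x y. x \<in> I \<Longrightarrow> y \<in> I \<Longrightarrow> x - y \<in> I"
    "\<And>x. x \<in> I \<Longrightarrow> - x \<in> I" "\<And>x y. x \<in> I \<Longrightarrow> y \<in> I \<Longrightarrow> x + y \<in> I"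
proof -
  show I0: "0 \<in> I" and diff: "\<And>x y. x \<in> I \<Longrightarrow> y \<in> I \<Longrightarrow> x - y \<in> I"
    using assms unfolding add_subgroup_def by blast+
  show uminus: "\<And>x. x \<in> I \<Longrightarrow> - x \<in> I" using diff[OF I0] by fastforce
  show "\<And>x y. x \<in> I \<Longrightarrow> y \<in> I \<Longrightarrow> x + y \<in> I" using diff[OF _ uminus] by fastforce
qed

lemma add_subgroupI:
  assumes "0 \<in> I" "\<And>x y. x \<in> I \<Longrightarrow> y \<in> I \<Longrightarrow> x + y \<in> I" "\<And>x. x \<in> I \<Longrightarrow> - x \<in> I"
  shows "add_subgroup I"
  using assms unfolding add_subgroup_def by (metis diff_conv_add_uminus)

lemma coset_refl: "add_subgroup I \<Longrightarrow> x \<in> A \<Longrightarrow> x \<in> coset A I x"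
  by (simp add: coset_def add_subgroupD(1))

lemma coset_eq:
  assumes I: "add_subgroup I" and y: "y \<in> coset A I x"
  shows "coset A I y = coset A I x"
proof -
  have yx: "y - x \<in> I" using y by (simp add: coset_def)
  show ?thesis
  proof (intro set_eqI iffI)
    fix z assume "z \<in> coset A I y"
    then have "z \<in> A" "z - y \<in> I" by (auto simp: coset_def)
    then show "z \<in> coset A I x" using add_subgroupD(4)[OF I \<open>z - y \<in> I\<close> yx] by (simp add: coset_def)
  next
    fix z assume "z \<in> coset A I x"
    then have "z \<in> A" "z - x \<in> I" by (auto simp: coset_def)
    then show "z \<in> coset A I y" using add_subgroupD(2)[OF I \<open>z - x \<in> I\<close> yx] by (simp add: coset_def)
  qed
qed

lemma coset_eqI: "add_subgroup I \<Longrightarrow> y \<in> A \<Longrightarrow> y - x \<in> I \<Longrightarrow> coset A I y = coset A I x"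
  by (rule coset_eq) (simp_all add: coset_def)

lemma quotient_setE:
  assumes I: "add_subgroup I" and C: "C \<in> quotient_set A I" and x: "x \<in> C"
  shows "x \<in> A" "C = coset A I x"
  using C x coset_eq[OF I] unfolding quotient_set_def by (auto simp: coset_def)

lemma
  assumes X: "topspace X = A" and I: "add_subgroup I"
  shows openin_quotient_top:
      "openin (quotient_top A X I) W \<longleftrightarrow> W \<subseteq> quotient_set A I \<and> openin X (\<Union>W)"
    and topspace_quotient_top: "topspace (quotient_top A X I) = quotient_set A I"
proof -
  let ?Q = "quotient_set A I"
  let ?T = "{U. U \<subseteq> ?Q \<and> openin X (\<Union>U)}"
  have "\<Union>?Q = A" using coset_refl[OF I] by (auto simp: quotient_set_def coset_def)
  then have Q: "?Q \<in> ?T" using X by auto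
  text \<open>Distinct cosets are disjoint, so unions commute with intersections of sets of cosets.\<close>
  have Union_Int: "\<Union>(U1 \<inter> U2) = \<Union>U1 \<inter> \<Union>U2" if "U1 \<subseteq> ?Q" "U2 \<subseteq> ?Q" for U1 U2
    using that quotient_setE(2)[OF I] by blast
  have generated: "V \<inter> ?Q \<in> ?T" if "generate_topology_on ?T V" for V
    using that
  proof (induction rule: generate_topology_on.induct)
    case (Int a b)
    have "(a \<inter> b) \<inter> ?Q = (a \<inter> ?Q) \<inter> (b \<inter> ?Q)" by blast
    then show ?case using Int.IH Union_Int[of "a \<inter> ?Q" "b \<inter> ?Q"] by (auto intro: openin_Int)
  next
    case (UN K)
    have "openin X (\<Union>k\<in>K. \<Union>(k \<inter> ?Q))" using UN.IH by (intro openin_Union) auto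
    moreover have "\<Union>(\<Union>K \<inter> ?Q) = (\<Union>k\<in>K. \<Union>(k \<inter> ?Q))" by blast
    ultimately show ?case unfolding mem_Collect_eq by (intro conjI) auto
  qed (auto simp: Int_absorb2)
  have "openin (quotient_top A X I) W \<longleftrightarrow> (\<exists>V. generate_topology_on ?T V \<and> W = V \<inter> ?Q)"
    unfolding quotient_top_def openin_subtopology openin_topology_generated_by_iff by blast
  then show "openin (quotient_top A X I) W \<longleftrightarrow> W \<subseteq> ?Q \<and> openin X (\<Union>W)"
    using generated by (auto intro!: exI[of _ W] generate_topology_on.Basis)
  show "topspace (quotient_top A X I) = ?Q"
    using Q unfolding quotient_top_def by (auto simp: topology_generated_by_topspace)
qed

lemma continuous_map_quotient_top:
  assumes X: "topspace X = A" and Y: "topspace Y = B"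
    and I: "add_subgroup I" and J: "add_subgroup J"
    and f: "continuous_map X Y f"
    and F: "\<And>x. x \<in> A \<Longrightarrow> F (coset A I x) = coset B J (f x)"
  shows "continuous_map (quotient_top A X I) (quotient_top B Y J) F"
  unfolding continuous_map topspace_quotient_top[OF X I] topspace_quotient_top[OF Y J]
proof (intro conjI allI impI)
  have fB: "f x \<in> B" if "x \<in> A" for x using f that X Y by (auto simp: continuous_map_def)
  show "F ` quotient_set A I \<subseteq> quotient_set B J"
    using F fB by (auto simp: quotient_set_def)
  fix U assume "openin (quotient_top B Y J) U"
  then have U: "U \<subseteq> quotient_set B J" "openin Y (\<Union>U)" using openin_quotient_top[OF Y J] by auto
  let ?P = "{C \<in> quotient_set A I. F C \<in> U}"
  have "\<Union>?P = {x \<in> topspace X. f x \<in> \<Union>U}"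
  proof (intro set_eqI iffI)
    fix x assume "x \<in> \<Union>?P"
    then obtain C where C: "C \<in> quotient_set A I" "F C \<in> U" "x \<in> C" by blast
    then have "x \<in> A" "F C = coset B J (f x)" using quotient_setE[OF I C(1,3)] F by auto
    then show "x \<in> {x \<in> topspace X. f x \<in> \<Union>U}" using C(2) coset_refl[OF J fB] X by blast
  next
    fix x assume "x \<in> {x \<in> topspace X. f x \<in> \<Union>U}"
    then obtain D where D: "x \<in> A" "D \<in> U" "f x \<in> D" using X by blast
    then have "F (coset A I x) \<in> U" using F quotient_setE(2)[OF J subsetD[OF U(1)]] by metis
    then show "x \<in> \<Union>?P" using D(1) coset_refl[OF I] by (auto simp: quotient_set_def)
  qed
  moreover have "openin X {x \<in> topspace X. f x \<in> \<Union>U}"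
    using openin_continuous_map_preimage[OF f U(2)] .
  ultimately show "openin (quotient_top A X I) ?P"
    using openin_quotient_top[OF X I] by auto
qed

lemma coset_image_coset:
  assumes I: "add_subgroup I" and J: "add_subgroup J" and IJ: "I \<subseteq> J" and AB: "A \<subseteq> B" and x: "x \<in> A"
  shows "{y \<in> B. \<exists>x'\<in>coset A I x. y - x' \<in> J} = coset B J x"
proof (intro set_eqI iffI)
  fix y assume "y \<in> {y \<in> B. \<exists>x'\<in>coset A I x. y - x' \<in> J}"
  then obtain x' where "y \<in> B" "x' - x \<in> J" "y - x' \<in> J" using IJ by (auto simp: coset_def)
  then have "(y - x') + (x' - x) \<in> J" using add_subgroupD(4)[OF J] by blast
  then show "y \<in> coset B J x" using \<open>y \<in> B\<close> by (simp add: coset_def)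
qed (use coset_refl[OF I x] in \<open>auto simp: coset_def\<close>)

lemma coset_Int_eq_coset:
  assumes J: "add_subgroup J" and IJ: "I \<subseteq> J" and JA: "J \<inter> A \<subseteq> I" and AB: "A \<subseteq> B"
    and A_diff: "\<And>x y. x \<in> A \<Longrightarrow> y \<in> A \<Longrightarrow> x - y \<in> A"
    and a: "a \<in> A" and c: "c - a \<in> J"
  shows "coset B J c \<inter> A = coset A I a"
proof (intro set_eqI iffI)
  fix y assume "y \<in> coset B J c \<inter> A"
  then have y: "y \<in> A" "y - c \<in> J" by (auto simp: coset_def)
  have "y - a = (y - c) + (c - a)" by simp
  then have "y - a \<in> J \<inter> A" using add_subgroupD(4)[OF J y(2) c] A_diff[OF y(1) a] by simp
  then show "y \<in> coset A I a" using y(1) JA by (auto simp: coset_def)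
next
  fix y assume "y \<in> coset A I a"
  then have y: "y \<in> A" "y - a \<in> J" using IJ by (auto simp: coset_def)
  have "y - c = (y - a) - (c - a)" by simp
  then have "y - c \<in> J" using add_subgroupD(2)[OF J y(2) c] by simp
  then show "y \<in> coset B J c \<inter> A" using y(1) AB by (auto simp: coset_def)
qed

text \<open>The inverse of the induced map is \<open>C \<mapsto> C \<inter> A\<close>: the class of \<open>c\<close> meets \<open>A\<close> in the class of \<open>f c\<close>.\<close>

lemma homeomorphic_map_quotient_top_inclusion:
  assumes X: "topspace X = A" and Y: "topspace Y = B"
    and I: "add_subgroup I" and J: "add_subgroup J" and IJ: "I \<subseteq> J" and JA: "J \<inter> A \<subseteq> I"
    and A_diff: "\<And>x y. x \<in> A \<Longrightarrow> y \<in> A \<Longrightarrow> x - y \<in> A"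
    and incl: "continuous_map X Y (\<lambda>x. x)"
    and f: "continuous_map Y X f" and f_J: "\<And>c. c \<in> B \<Longrightarrow> c - f c \<in> J"
  shows "homeomorphic_map (quotient_top A X I) (quotient_top B Y J) (\<lambda>C. {y \<in> B. \<exists>x\<in>C. y - x \<in> J})"
proof -
  define F where "F = (\<lambda>C. {y \<in> B. \<exists>x\<in>C. y - x \<in> J})"
  define G where "G = (\<lambda>C. C \<inter> A)"
  have AB: "A \<subseteq> B" using incl X Y by (auto simp: continuous_map_def)
  have fA: "f c \<in> A" if "c \<in> B" for c using f that X Y by (auto simp: continuous_map_def)
  have F: "F (coset A I x) = coset B J x" if "x \<in> A" for x
    unfolding F_def by (rule coset_image_coset[OF I J IJ AB that])
  have G: "G (coset B J c) = coset A I (f c)" if "c \<in> B" for c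
    unfolding G_def by (rule coset_Int_eq_coset[OF J IJ JA AB A_diff fA[OF that] f_J[OF that]])
  have "continuous_map (quotient_top A X I) (quotient_top B Y J) F"
    using continuous_map_quotient_top[OF X Y I J incl] F by blast
  moreover have "continuous_map (quotient_top B Y J) (quotient_top A X I) G"
    using continuous_map_quotient_top[OF Y X J I f] G by blast
  moreover have "G (F C) = C" if "C \<in> quotient_set A I" for C
  proof -
    obtain x where x: "x \<in> A" "C = coset A I x" using \<open>C \<in> quotient_set A I\<close> by (auto simp: quotient_set_def)
    have "x - x \<in> J" using add_subgroupD(1)[OF J] by simp
    then have "G (coset B J x) = coset A I x"
      unfolding G_def using AB x(1) by (intro coset_Int_eq_coset[OF J IJ JA AB A_diff]) auto
    then show ?thesis using F[OF x(1)] x(2) by simp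
  qed
  moreover have "F (G C) = C" if "C \<in> quotient_set B J" for C
  proof -
    obtain c where c: "c \<in> B" "C = coset B J c" using \<open>C \<in> quotient_set B J\<close> by (auto simp: quotient_set_def)
    have "- (c - f c) \<in> J" using add_subgroupD(3)[OF J f_J[OF c(1)]] .
    then have "coset B J (f c) = coset B J c" using AB fA[OF c(1)] by (intro coset_eqI[OF J]) auto
    then show ?thesis using F[OF fA[OF c(1)]] G[OF c(1)] c(2) by simp
  qed
  ultimately show ?thesis
    unfolding homeomorphic_map_maps homeomorphic_maps_def F_def[symmetric]
    using topspace_quotient_top[OF X I] topspace_quotient_top[OF Y J] by blast
qed

section \<open>Weighted \<open>\<ell>\<^sup>1\<close> spaces of coefficient families\<close>

definition weighted_l1 :: "nat \<Rightarrow> (int \<Rightarrow> nat list \<Rightarrow> real) set \<Rightarrow> coeffs set" where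
  "weighted_l1 n W = {c. (\<forall>k \<alpha>. \<alpha> \<notin> words n \<longrightarrow> c k \<alpha> = 0) \<and>
     (\<forall>w\<in>W. (\<lambda>(k, \<alpha>). norm (c k \<alpha>) * w k \<alpha>) summable_on UNIV)}"

abbreviation l1_topology :: "nat \<Rightarrow> (int \<Rightarrow> nat list \<Rightarrow> real) set \<Rightarrow> coeffs topology" where
  "l1_topology n W \<equiv> seminorm_topology (weighted_l1 n W) (wnorm ` W)"

text \<open>
  The bound \<open>w 0 \<alpha> \<le> w k \<alpha>\<close> controls the coefficients along each slice \<open>k \<mapsto> c k \<alpha>\<close>, which
  makes the Cauchy product in \<^const>\<open>cmul\<close> converge.\<close>

definition weight_family :: "(int \<Rightarrow> nat list \<Rightarrow> real) set \<Rightarrow> bool" where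
  "weight_family W \<longleftrightarrow> W \<noteq> {} \<and> (\<forall>w\<in>W. \<forall>k \<alpha>. 0 < w 0 \<alpha> \<and> w 0 \<alpha> \<le> w k \<alpha>) \<and>
     (\<forall>w1\<in>W. \<forall>w2\<in>W. \<exists>w3\<in>W. \<forall>k \<alpha>. w1 k \<alpha> \<le> w3 k \<alpha> \<and> w2 k \<alpha> \<le> w3 k \<alpha>) \<and>
     (\<forall>w\<in>W. \<forall>k l \<alpha> \<beta>. w (k + l) (\<alpha> @ \<beta>) \<le> w k \<alpha> * w l \<beta>)"

lemma weight_familyD:
  assumes "weight_family W"
  shows "W \<noteq> {}" "\<And>w \<alpha>. w \<in> W \<Longrightarrow> 0 < w 0 \<alpha>" "\<And>w k \<alpha>. w \<in> W \<Longrightarrow> w 0 \<alpha> \<le> w k \<alpha>"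
    "\<And>w1 w2. w1 \<in> W \<Longrightarrow> w2 \<in> W \<Longrightarrow> \<exists>w3\<in>W. \<forall>k \<alpha>. w1 k \<alpha> \<le> w3 k \<alpha> \<and> w2 k \<alpha> \<le> w3 k \<alpha>"
    "\<And>w k l \<alpha> \<beta>. w \<in> W \<Longrightarrow> w (k + l) (\<alpha> @ \<beta>) \<le> w k \<alpha> * w l \<beta>"
  using assms unfolding weight_family_def by blast+

lemma weight_pos: "weight_family W \<Longrightarrow> w \<in> W \<Longrightarrow> 0 < w k \<alpha>"
  using weight_familyD(2,3) by (meson less_le_trans)

lemma weight_nonneg: "weight_family W \<Longrightarrow> w \<in> W \<Longrightarrow> 0 \<le> w k \<alpha>"
  using weight_pos less_imp_le by blast

lemma weight_sandwich_le:
  assumes W: "weight_family W" and w: "w \<in> W"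
  shows "w (K + k) (u @ \<delta> @ v) \<le> w k u * w 0 v * w K \<delta>"
proof -
  have "w (k + (K + 0)) (u @ (\<delta> @ v)) \<le> w k u * w (K + 0) (\<delta> @ v)"
    by (rule weight_familyD(5)[OF W w])
  also have "\<dots> \<le> w k u * (w K \<delta> * w 0 v)"
    using weight_familyD(5)[OF W w, of K 0 \<delta> v] weight_nonneg[OF W w] by (intro mult_left_mono) auto
  finally show ?thesis by (simp add: ac_simps)
qed

lemma weight_split_le:
  assumes W: "weight_family W" and w: "w \<in> W" and "u @ v = \<beta>" "u = [] \<or> v = []"
  shows "w (K + k) (u @ \<delta> @ v) \<le> w k \<beta> * w K \<delta>"
  using assms(3,4) weight_familyD(5)[OF W w, of k K \<beta> \<delta>] weight_familyD(5)[OF W w, of K k \<delta> \<beta>]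
  by (auto simp: ac_simps)

lemma weighted_l1D: "c \<in> weighted_l1 n W \<Longrightarrow> \<alpha> \<notin> words n \<Longrightarrow> c k \<alpha> = 0"
  unfolding weighted_l1_def by blast

lemma weighted_l1_summable:
  "c \<in> weighted_l1 n W \<Longrightarrow> w \<in> W \<Longrightarrow> (\<lambda>(k, \<alpha>). norm (c k \<alpha>) * w k \<alpha>) summable_on UNIV"
  unfolding weighted_l1_def by blast

lemma weighted_l1I:
  assumes "\<And>k \<alpha>. \<alpha> \<notin> words n \<Longrightarrow> c k \<alpha> = 0"
    and "\<And>w. w \<in> W \<Longrightarrow> (\<lambda>(k, \<alpha>). norm (c k \<alpha>) * w k \<alpha>) summable_on UNIV"
  shows "c \<in> weighted_l1 n W"
  using assms unfolding weighted_l1_def by blast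

lemma weighted_l1_dominated:
  assumes W: "weight_family W" and c: "c \<in> weighted_l1 n W"
    and supp: "\<And>k \<alpha>. \<alpha> \<notin> words n \<Longrightarrow> d k \<alpha> = 0"
    and le: "\<And>k \<alpha>. norm (d k \<alpha>) \<le> norm (c k \<alpha>) + norm (e k \<alpha>)" and e: "e \<in> weighted_l1 n W"
  shows "d \<in> weighted_l1 n W"
proof (rule weighted_l1I[OF supp])
  fix w assume w: "w \<in> W"
  have "(\<lambda>p. (case p of (k, \<alpha>) \<Rightarrow> norm (c k \<alpha>) * w k \<alpha>) + (case p of (k, \<alpha>) \<Rightarrow> norm (e k \<alpha>) * w k \<alpha>))
      summable_on UNIV"
    using weighted_l1_summable[OF c w] weighted_l1_summable[OF e w] by (rule summable_on_add)
  then show "(\<lambda>(k, \<alpha>). norm (d k \<alpha>) * w k \<alpha>) summable_on UNIV"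
    by (rule summable_on_comparison_test)
       (use le weight_nonneg[OF W w] in \<open>auto simp: distrib_right[symmetric] intro!: mult_right_mono\<close>)
qed

lemma weighted_l1_zero: "0 \<in> weighted_l1 n W"
  by (rule weighted_l1I) (auto simp: case_prod_unfold)

lemma weighted_l1_add:
  assumes W: "weight_family W" and x: "x \<in> weighted_l1 n W" and y: "y \<in> weighted_l1 n W"
  shows "x + y \<in> weighted_l1 n W"
  by (rule weighted_l1_dominated[OF W x _ _ y]) (auto simp: weighted_l1D[OF x] weighted_l1D[OF y] norm_triangle_ineq)

lemma weighted_l1_diff:
  assumes W: "weight_family W" and x: "x \<in> weighted_l1 n W" and y: "y \<in> weighted_l1 n W"
  shows "x - y \<in> weighted_l1 n W"
  by (rule weighted_l1_dominated[OF W x _ _ y]) (auto simp: weighted_l1D[OF x] weighted_l1D[OF y] norm_triangle_ineq4)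

lemma wnorm_nonneg:
  assumes W: "weight_family W" and w: "w \<in> W"
  shows "0 \<le> wnorm w x"
  unfolding wnorm_def by (rule infsum_nonneg) (auto intro!: mult_nonneg_nonneg weight_nonneg[OF W w])

lemma wnorm_uminus: "wnorm w (- x) = wnorm w x"
  unfolding wnorm_def by simp

lemma wnorm_zero [simp]: "wnorm w 0 = 0"
  unfolding wnorm_def by (simp add: case_prod_unfold)

lemma wnorm_triangle:
  assumes W: "weight_family W" and x: "x \<in> weighted_l1 n W" and y: "y \<in> weighted_l1 n W" and w: "w \<in> W"
  shows "wnorm w (x + y) \<le> wnorm w x + wnorm w y"
proof -
  have "wnorm w (x + y) \<le>
      (\<Sum>\<^sub>\<infinity>p. (case p of (k, \<alpha>) \<Rightarrow> norm (x k \<alpha>) * w k \<alpha>) + (case p of (k, \<alpha>) \<Rightarrow> norm (y k \<alpha>) * w k \<alpha>))"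
    unfolding wnorm_def
    by (rule infsum_mono[OF weighted_l1_summable[OF weighted_l1_add[OF W x y] w]
          summable_on_add[OF weighted_l1_summable[OF x w] weighted_l1_summable[OF y w]]])
       (use weight_nonneg[OF W w] in \<open>auto simp: distrib_right[symmetric] intro!: mult_right_mono norm_triangle_ineq\<close>)
  also have "\<dots> = wnorm w x + wnorm w y"
    unfolding wnorm_def by (rule infsum_add[OF weighted_l1_summable[OF x w] weighted_l1_summable[OF y w]])
  finally show ?thesis .
qed

lemma coeff_le_wnorm:
  assumes W: "weight_family W" and x: "x \<in> weighted_l1 n W" and w: "w \<in> W"
  shows "norm (x k \<alpha>) * w k \<alpha> \<le> wnorm w x"
proof -
  have "(\<Sum>(k, \<alpha>)\<in>{(k, \<alpha>)}. norm (x k \<alpha>) * w k \<alpha>) \<le> wnorm w x"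
    unfolding wnorm_def
    by (rule finite_sum_le_infsum[OF weighted_l1_summable[OF x w]]) (auto intro!: mult_nonneg_nonneg weight_nonneg[OF W w])
  then show ?thesis by simp
qed

lemma seminorm_family_weighted_l1:
  assumes W: "weight_family W"
  shows "seminorm_family (weighted_l1 n W) (wnorm ` W)"
  unfolding seminorm_family_def
proof (intro conjI ballI)
  show "wnorm ` W \<noteq> {}" using weight_familyD(1)[OF W] by simp
  show "x - y \<in> weighted_l1 n W" if "x \<in> weighted_l1 n W" "y \<in> weighted_l1 n W" for x y
    using weighted_l1_diff[OF W that] .
  fix p q assume "p \<in> wnorm ` W" "q \<in> wnorm ` W"
  then obtain w1 w2 where w: "w1 \<in> W" "w2 \<in> W" "p = wnorm w1" "q = wnorm w2" by blast
  obtain w3 where w3: "w3 \<in> W" "\<forall>k \<alpha>. w1 k \<alpha> \<le> w3 k \<alpha> \<and> w2 k \<alpha> \<le> w3 k \<alpha>"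
    using weight_familyD(4)[OF W w(1,2)] by blast
  have "wnorm v x \<le> wnorm w3 x" if "v \<in> W" "\<forall>k \<alpha>. v k \<alpha> \<le> w3 k \<alpha>" "x \<in> weighted_l1 n W" for v x
    unfolding wnorm_def
    by (rule infsum_mono[OF weighted_l1_summable[OF that(3,1)] weighted_l1_summable[OF that(3) w3(1)]])
       (use that in \<open>auto intro!: mult_left_mono\<close>)
  then show "\<exists>s\<in>wnorm ` W. \<forall>x\<in>weighted_l1 n W. p x \<le> s x \<and> q x \<le> s x"
    using w w3 by (intro bexI[of _ "wnorm w3"]) auto
next
  fix p assume "p \<in> wnorm ` W"
  then obtain w where w: "w \<in> W" "p = wnorm w" by blast
  show "p 0 = 0" using w by simp
  show "0 \<le> p x" for x using w wnorm_nonneg[OF W] by simp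
  show "p (x - y) = p (y - x)" for x y using w by (metis minus_diff_eq wnorm_uminus)
  fix x y z assume xyz: "x \<in> weighted_l1 n W" "y \<in> weighted_l1 n W" "z \<in> weighted_l1 n W"
  have "x - z = (x - y) + (y - z)" by simp
  then show "p (x - z) \<le> p (x - y) + p (y - z)"
    using w wnorm_triangle[OF W weighted_l1_diff[OF W xyz(1,2)] weighted_l1_diff[OF W xyz(2,3)] w(1)] by simp
qed

lemma topspace_l1_topology: "weight_family W \<Longrightarrow> topspace (l1_topology n W) = weighted_l1 n W"
  by (rule topspace_seminorm_topology[OF seminorm_family_weighted_l1])

lemma
  assumes W: "weight_family W" and W': "weight_family W'"
    and dominated: "\<And>w'. w' \<in> W' \<Longrightarrow> \<exists>w\<in>W. \<forall>k \<alpha>. w' k \<alpha> \<le> w k \<alpha>"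
  shows weighted_l1_subset: "weighted_l1 n W \<subseteq> weighted_l1 n W'"
    and continuous_map_weighted_l1_inclusion: "continuous_map (l1_topology n W) (l1_topology n W') (\<lambda>x. x)"
proof -
  have le: "wnorm w' x \<le> wnorm w x" and summable: "(\<lambda>(k, \<alpha>). norm (x k \<alpha>) * w' k \<alpha>) summable_on UNIV"
    if "x \<in> weighted_l1 n W" "w \<in> W" "\<forall>k \<alpha>. w' k \<alpha> \<le> w k \<alpha>" "w' \<in> W'" for x w w'
  proof -
    show "(\<lambda>(k, \<alpha>). norm (x k \<alpha>) * w' k \<alpha>) summable_on UNIV"
      by (rule summable_on_comparison_test[OF weighted_l1_summable[OF that(1,2)]])
         (use that(3) weight_nonneg[OF W' that(4)] in \<open>auto intro: mult_left_mono\<close>)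
    then show "wnorm w' x \<le> wnorm w x"
      unfolding wnorm_def by (rule infsum_mono[OF _ weighted_l1_summable[OF that(1,2)]])
        (use that(3) in \<open>auto intro: mult_left_mono\<close>)
  qed
  show subset: "weighted_l1 n W \<subseteq> weighted_l1 n W'"
  proof
    fix x assume x: "x \<in> weighted_l1 n W"
    show "x \<in> weighted_l1 n W'"
    proof (rule weighted_l1I)
      show "x k \<alpha> = 0" if "\<alpha> \<notin> words n" for k \<alpha> using weighted_l1D[OF x that] .
      show "(\<lambda>(k, \<alpha>). norm (x k \<alpha>) * w' k \<alpha>) summable_on UNIV" if w': "w' \<in> W'" for w'
        using dominated[OF w'] summable[OF x _ _ w'] by blast
    qed
  qed
  show "continuous_map (l1_topology n W) (l1_topology n W') (\<lambda>x. x)"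
  proof (rule continuous_map_seminorm_topology[OF seminorm_family_weighted_l1[OF W] seminorm_family_weighted_l1[OF W']])
    fix q assume "q \<in> wnorm ` W'"
    then obtain w' where w': "w' \<in> W'" "q = wnorm w'" by blast
    then obtain w where "w \<in> W" "\<forall>k \<alpha>. w' k \<alpha> \<le> w k \<alpha>" using dominated by blast
    then show "\<exists>p\<in>wnorm ` W. \<exists>C>0. \<forall>z\<in>weighted_l1 n W. q z \<le> C * p z"
      using le w' by (intro bexI[of _ "wnorm w"] exI[of _ 1]) auto
  qed (use subset in auto)
qed

lemma infsum_eq_single:
  fixes f :: "'a \<Rightarrow> 'b::{comm_monoid_add, t2_space}"
  assumes "\<And>j. j \<noteq> k \<Longrightarrow> f j = 0"
  shows "infsum f UNIV = f k"
proof -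
  have "infsum f UNIV = infsum f {k}" by (rule infsum_cong_neutral) (use assms in auto)
  then show ?thesis by simp
qed

lemma reindex_neutral:
  fixes f :: "'a \<Rightarrow> 'c::{comm_monoid_add, t2_space}" and h :: "'b \<Rightarrow> 'a"
  assumes inj: "inj h" and outside: "\<And>p. p \<notin> range h \<Longrightarrow> f p = 0"
  shows "f summable_on UNIV \<longleftrightarrow> (f \<circ> h) summable_on UNIV" and "infsum f UNIV = infsum (f \<circ> h) UNIV"
proof -
  have "f summable_on UNIV \<longleftrightarrow> f summable_on range h"
    by (rule summable_on_cong_neutral) (use outside in auto)
  also have "\<dots> \<longleftrightarrow> (f \<circ> h) summable_on UNIV" by (rule summable_on_reindex[OF inj])
  finally show "f summable_on UNIV \<longleftrightarrow> (f \<circ> h) summable_on UNIV" .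
  have "infsum f UNIV = infsum f (range h)"
    by (rule infsum_cong_neutral) (use outside in auto)
  also have "\<dots> = infsum (f \<circ> h) UNIV" by (rule infsum_reindex[OF inj])
  finally show "infsum f UNIV = infsum (f \<circ> h) UNIV" .
qed

lemma infsum_finite_sum:
  fixes f :: "'p \<Rightarrow> 'm \<Rightarrow> 'b::{topological_comm_monoid_add, t2_space}"
  assumes "finite F" and "\<And>p. p \<in> F \<Longrightarrow> f p summable_on A"
  shows "(\<lambda>m. \<Sum>p\<in>F. f p m) summable_on A" "infsum (\<lambda>m. \<Sum>p\<in>F. f p m) A = (\<Sum>p\<in>F. infsum (f p) A)"
proof -
  have "(\<lambda>m. \<Sum>p\<in>F. f p m) summable_on A \<and> infsum (\<lambda>m. \<Sum>p\<in>F. f p m) A = (\<Sum>p\<in>F. infsum (f p) A)"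
    using assms
  proof (induction F rule: finite_induct)
    case (insert x F)
    then have "f x summable_on A" by simp
    with insert show ?case by (simp add: infsum_add summable_on_add)
  qed simp
  then show "(\<lambda>m. \<Sum>p\<in>F. f p m) summable_on A" "infsum (\<lambda>m. \<Sum>p\<in>F. f p m) A = (\<Sum>p\<in>F. infsum (f p) A)"
    by auto
qed

lemma infsum_diff:
  fixes f g :: "'a \<Rightarrow> 'b::{topological_ab_group_add, t2_space}"
  assumes "f summable_on A" "g summable_on A"
  shows "infsum (\<lambda>p. f p - g p) A = infsum f A - infsum g A"
  using infsum_add[OF assms(1) summable_on_uminus[THEN iffD2, OF assms(2)]] by (simp add: infsum_uminus)

lemma sum_fun_apply: "(\<Sum>m\<in>F. t m) k \<alpha> = (\<Sum>m\<in>F. t m k \<alpha>)"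
  by (induction F rule: infinite_finite_induct) auto

lemma abs_summable_coeff:
  fixes t :: "'m \<Rightarrow> coeffs"
  assumes W: "weight_family W" and t: "\<And>m. t m \<in> weighted_l1 n W"
    and summable: "\<And>w. w \<in> W \<Longrightarrow> (\<lambda>m. wnorm w (t m)) summable_on UNIV"
  shows "(\<lambda>m. norm (t m k \<alpha>)) summable_on UNIV"
proof -
  obtain w0 where w0: "w0 \<in> W" using weight_familyD(1)[OF W] by blast
  have "norm (t m k \<alpha>) \<le> wnorm w0 (t m) * (1 / w0 k \<alpha>)" for m
    using coeff_le_wnorm[OF W t w0] weight_pos[OF W w0] by (simp add: pos_le_divide_eq)
  then show ?thesis
    by (rule summable_on_comparison_test[OF summable_on_cmult_left[OF summable[OF w0]]]) simp
qed

lemma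
  fixes t :: "'m \<Rightarrow> coeffs"
  assumes W: "weight_family W" and t: "\<And>m. t m \<in> weighted_l1 n W"
    and summable: "\<And>w. w \<in> W \<Longrightarrow> (\<lambda>m. wnorm w (t m)) summable_on UNIV"
  shows series_weighted_l1: "(\<lambda>k \<alpha>. \<Sum>\<^sub>\<infinity>m. t m k \<alpha>) \<in> weighted_l1 n W"
    and wnorm_series_le: "w \<in> W \<Longrightarrow> wnorm w (\<lambda>k \<alpha>. \<Sum>\<^sub>\<infinity>m. t m k \<alpha>) \<le> (\<Sum>\<^sub>\<infinity>m. wnorm w (t m))"
proof -
  note coeff = abs_summable_coeff[OF W t summable]
  define S where "S = (\<lambda>k \<alpha>. \<Sum>\<^sub>\<infinity>m. t m k \<alpha>)"
  have finite_sums: "(\<Sum>p\<in>F. norm (S (fst p) (snd p)) * w (fst p) (snd p)) \<le> (\<Sum>\<^sub>\<infinity>m. wnorm w (t m))"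
    if w: "w \<in> W" and F: "finite F" for w F
  proof -
    let ?f = "\<lambda>p m. norm (t m (fst p) (snd p)) * w (fst p) (snd p)"
    have f: "?f p summable_on UNIV" for p
      using coeff by (auto intro!: summable_on_cmult_left)
    have "(\<Sum>p\<in>F. norm (S (fst p) (snd p)) * w (fst p) (snd p)) \<le> (\<Sum>p\<in>F. \<Sum>\<^sub>\<infinity>m. ?f p m)"
    proof (rule sum_mono)
      fix p
      have "norm (S (fst p) (snd p)) * w (fst p) (snd p) \<le> (\<Sum>\<^sub>\<infinity>m. norm (t m (fst p) (snd p))) * w (fst p) (snd p)"
        unfolding S_def using norm_infsum_bound[OF coeff] weight_nonneg[OF W w] by (rule mult_right_mono)
      also have "\<dots> = (\<Sum>\<^sub>\<infinity>m. ?f p m)"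
        by (rule infsum_cmult_left[symmetric]) (use coeff in auto)
      finally show "norm (S (fst p) (snd p)) * w (fst p) (snd p) \<le> (\<Sum>\<^sub>\<infinity>m. ?f p m)" .
    qed
    also have "\<dots> = (\<Sum>\<^sub>\<infinity>m. \<Sum>p\<in>F. ?f p m)" using infsum_finite_sum(2)[OF F f] by simp
    also have "\<dots> \<le> (\<Sum>\<^sub>\<infinity>m. wnorm w (t m))"
      unfolding wnorm_def case_prod_unfold
      by (rule infsum_mono[OF infsum_finite_sum(1)[OF F f] summable[OF w, unfolded wnorm_def case_prod_unfold]])
         (auto intro!: finite_sum_le_infsum[OF weighted_l1_summable[OF t w, unfolded case_prod_unfold] F]
           mult_nonneg_nonneg weight_nonneg[OF W w])
    finally show ?thesis .
  qed
  have S_summable: "(\<lambda>(k, \<alpha>). norm (S k \<alpha>) * w k \<alpha>) summable_on UNIV" if w: "w \<in> W" for w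
    by (rule nonneg_bdd_above_summable_on)
       (use finite_sums[OF w] weight_nonneg[OF W w] in
         \<open>auto simp: case_prod_unfold intro!: bdd_aboveI[of _ "\<Sum>\<^sub>\<infinity>m. wnorm w (t m)"]\<close>)
  show "(\<lambda>k \<alpha>. \<Sum>\<^sub>\<infinity>m. t m k \<alpha>) \<in> weighted_l1 n W"
    unfolding S_def[symmetric] by (rule weighted_l1I[OF _ S_summable]) (simp add: S_def weighted_l1D[OF t])
  show "wnorm w (\<lambda>k \<alpha>. \<Sum>\<^sub>\<infinity>m. t m k \<alpha>) \<le> (\<Sum>\<^sub>\<infinity>m. wnorm w (t m))" if w: "w \<in> W"
    unfolding S_def[symmetric] wnorm_def[of w S]
    by (rule infsum_le_finite_sums[OF S_summable[OF w]]) (use finite_sums[OF w] in \<open>auto simp: case_prod_unfold\<close>)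
qed

lemma series_tail_small:
  fixes t :: "'m \<Rightarrow> coeffs"
  assumes W: "weight_family W" and t: "\<And>m. t m \<in> weighted_l1 n W"
    and summable: "\<And>w. w \<in> W \<Longrightarrow> (\<lambda>m. wnorm w (t m)) summable_on UNIV"
    and w: "w \<in> W" and e: "e > 0"
  shows "\<exists>F. finite F \<and> wnorm w ((\<lambda>k \<alpha>. \<Sum>\<^sub>\<infinity>m. t m k \<alpha>) - (\<Sum>m\<in>F. t m)) < e"
proof -
  obtain F where F: "finite F" "dist (\<Sum>m\<in>F. wnorm w (t m)) (\<Sum>\<^sub>\<infinity>m. wnorm w (t m)) \<le> e / 2"
    using infsum_finite_approximation[OF summable[OF w], of "e / 2"] e by auto
  define t' where "t' m = (if m \<in> F then 0 else t m)" for m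
  have t': "t' m \<in> weighted_l1 n W" for m using t weighted_l1_zero by (simp add: t'_def)
  have summable': "(\<lambda>m. wnorm v (t' m)) summable_on UNIV" if v: "v \<in> W" for v
    by (rule summable_on_comparison_test[OF summable[OF v]]) (auto simp: t'_def wnorm_nonneg[OF W v])
  have tail: "(\<lambda>k \<alpha>. \<Sum>\<^sub>\<infinity>m. t m k \<alpha>) - (\<Sum>m\<in>F. t m) = (\<lambda>k \<alpha>. \<Sum>\<^sub>\<infinity>m. t' m k \<alpha>)"
  proof (intro ext)
    fix k \<alpha>
    have "(\<Sum>\<^sub>\<infinity>m. t' m k \<alpha>) = (\<Sum>\<^sub>\<infinity>m\<in>UNIV - F. t m k \<alpha>)"
      by (rule infsum_cong_neutral) (auto simp: t'_def)
    also have "\<dots> = (\<Sum>\<^sub>\<infinity>m. t m k \<alpha>) - (\<Sum>\<^sub>\<infinity>m\<in>F. t m k \<alpha>)"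
      by (rule infsum_Diff[OF abs_summable_summable[OF abs_summable_coeff[OF W t summable]]]) (use F in auto)
    finally show "((\<lambda>k \<alpha>. \<Sum>\<^sub>\<infinity>m. t m k \<alpha>) - (\<Sum>m\<in>F. t m)) k \<alpha> = (\<Sum>\<^sub>\<infinity>m. t' m k \<alpha>)"
      using F by (simp add: sum_fun_apply)
  qed
  have "wnorm w ((\<lambda>k \<alpha>. \<Sum>\<^sub>\<infinity>m. t m k \<alpha>) - (\<Sum>m\<in>F. t m)) \<le> (\<Sum>\<^sub>\<infinity>m. wnorm w (t' m))"
    unfolding tail by (rule wnorm_series_le[OF W t' summable' w])
  also have "\<dots> = (\<Sum>\<^sub>\<infinity>m\<in>UNIV - F. wnorm w (t m))"
    by (rule infsum_cong_neutral) (auto simp: t'_def)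
  also have "\<dots> = (\<Sum>\<^sub>\<infinity>m. wnorm w (t m)) - (\<Sum>m\<in>F. wnorm w (t m))"
    by (subst infsum_Diff[OF summable[OF w]]) (use F in auto)
  also have "\<dots> \<le> e / 2"
    using F(2) abs_ge_minus_self[of "(\<Sum>m\<in>F. wnorm w (t m)) - (\<Sum>\<^sub>\<infinity>m. wnorm w (t m))"]
    unfolding dist_real_def by linarith
  finally show ?thesis using F(1) e by (intro exI[of _ F]) auto
qed

lemma series_mem_closedin:
  fixes t :: "'m \<Rightarrow> coeffs"
  assumes W: "weight_family W" and t: "\<And>m. t m \<in> weighted_l1 n W"
    and summable: "\<And>w. w \<in> W \<Longrightarrow> (\<lambda>m. wnorm w (t m)) summable_on UNIV"
    and I: "closedin (l1_topology n W) I" "0 \<in> I" "\<And>x y. x \<in> I \<Longrightarrow> y \<in> I \<Longrightarrow> x + y \<in> I"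
    and tI: "\<And>m. t m \<in> I"
  shows "(\<lambda>k \<alpha>. \<Sum>\<^sub>\<infinity>m. t m k \<alpha>) \<in> I"
proof (rule mem_closedin_seminorm_topology[OF seminorm_family_weighted_l1[OF W] I(1)
      series_weighted_l1[OF W t summable]])
  fix p and e :: real assume "p \<in> wnorm ` W" "e > 0"
  then obtain w where w: "w \<in> W" "p = wnorm w" by blast
  obtain F where F: "finite F" "wnorm w ((\<lambda>k \<alpha>. \<Sum>\<^sub>\<infinity>m. t m k \<alpha>) - (\<Sum>m\<in>F. t m)) < e"
    using series_tail_small[OF W t summable w(1) \<open>e > 0\<close>] by blast
  have "(\<Sum>m\<in>F. t m) \<in> I"
    using F(1)
  proof (induction F rule: finite_induct)
    case (insert m F)
    then show ?case using I(3)[OF tI[of m] insert.IH] by (simp only: sum.insert[OF insert(1,2)])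
  qed (simp only: sum.empty I(2))
  then show "\<exists>y\<in>I. p ((\<lambda>k \<alpha>. \<Sum>\<^sub>\<infinity>m. t m k \<alpha>) - y) < e" using F w by blast
qed

definition monomial :: "complex \<Rightarrow> int \<Rightarrow> nat list \<Rightarrow> coeffs" where
  "monomial s k u = (\<lambda>k' \<alpha>. if k' = k \<and> \<alpha> = u then s else 0)"

text \<open>\<^term>\<open>sandwich s k u v c\<close> is the product \<open>s z\<^sup>k \<zeta>\<^sub>u \<cdot> c \<cdot> \<zeta>\<^sub>v\<close>.\<close>

definition sandwich :: "complex \<Rightarrow> int \<Rightarrow> nat list \<Rightarrow> nat list \<Rightarrow> coeffs \<Rightarrow> coeffs" where
  "sandwich s k u v c = (\<lambda>K \<gamma>. if \<exists>\<delta>. \<gamma> = u @ \<delta> @ v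
     then s * c (K - k) (drop (length u) (take (length \<gamma> - length v) \<gamma>)) else 0)"

definition sandwich_closed :: "nat \<Rightarrow> coeffs set \<Rightarrow> bool" where
  "sandwich_closed n I \<longleftrightarrow>
     (\<forall>s k u v x. u \<in> words n \<longrightarrow> v \<in> words n \<longrightarrow> x \<in> I \<longrightarrow> sandwich s k u v x \<in> I)"

lemma words_append [simp]: "u @ v \<in> words n \<longleftrightarrow> u \<in> words n \<and> v \<in> words n"
  unfolding words_def by auto

lemma words_Nil [simp]: "[] \<in> words n"
  unfolding words_def by simp

lemma wnorm_monomial: "wnorm w (monomial s k u) = norm s * w k u"
proof -
  have "wnorm w (monomial s k u) = (case (k, u) of (k', \<alpha>) \<Rightarrow> norm (monomial s k u k' \<alpha>) * w k' \<alpha>)"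
    unfolding wnorm_def by (rule infsum_eq_single) (auto simp: monomial_def split: if_splits)
  then show ?thesis by (simp add: monomial_def)
qed

lemma monomial_weighted_l1:
  assumes "u \<in> words n \<or> s = 0"
  shows "monomial s k u \<in> weighted_l1 n W"
proof (rule weighted_l1I)
  show "\<And>k' \<alpha>. \<alpha> \<notin> words n \<Longrightarrow> monomial s k u k' \<alpha> = 0" using assms by (auto simp: monomial_def)
  show "(\<lambda>(k', \<alpha>). norm (monomial s k u k' \<alpha>) * w k' \<alpha>) summable_on UNIV" for w
    by (rule finite_nonzero_values_imp_summable_on, rule finite_subset[of _ "{(k, u)}"])
       (auto simp: monomial_def split: if_splits)
qed

lemma monomial_zero [simp]: "monomial 0 k u = 0"
  by (simp add: monomial_def fun_eq_iff)

lemma sandwich_app [simp]: "sandwich s k u v c K (u @ \<delta> @ v) = s * c (K - k) \<delta>"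
  by (auto simp: sandwich_def)

lemma sandwich_eq_0: "\<nexists>\<delta>. \<gamma> = u @ \<delta> @ v \<Longrightarrow> sandwich s k u v c K \<gamma> = 0"
  by (simp add: sandwich_def)

lemma prefix_iff_take: "(\<exists>\<delta>. \<gamma> = u @ \<delta>) \<longleftrightarrow> take (length u) \<gamma> = u"
  by (metis append_eq_conv_conj append_take_drop_id)

lemma suffix_iff_drop: "(\<exists>\<delta>. \<gamma> = \<delta> @ v) \<longleftrightarrow> drop (length \<gamma> - length v) \<gamma> = v"
proof
  assume "drop (length \<gamma> - length v) \<gamma> = v"
  then show "\<exists>\<delta>. \<gamma> = \<delta> @ v" by (metis append_take_drop_id)
qed auto

lemma sandwich_left:
  "sandwich s k u [] c K \<gamma> = (if take (length u) \<gamma> = u then s * c (K - k) (drop (length u) \<gamma>) else 0)"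
  unfolding sandwich_def by (simp add: prefix_iff_take)

lemma sandwich_right:
  "sandwich s k [] v c K \<gamma> =
     (if drop (length \<gamma> - length v) \<gamma> = v then s * c (K - k) (take (length \<gamma> - length v) \<gamma>) else 0)"
  unfolding sandwich_def by (simp add: suffix_iff_drop)

lemma sandwich_scalar_0 [simp]: "sandwich 0 k u v c = 0"
  and sandwich_0 [simp]: "sandwich s k u v 0 = 0"
  and sandwich_one: "sandwich 1 0 [] [] c = c"
  and sandwich_uminus_one: "sandwich (- 1) 0 [] [] c = - c"
  by (auto simp: sandwich_def fun_eq_iff)

lemma sandwich_add: "sandwich s k u v (x + y) = sandwich s k u v x + sandwich s k u v y"
  and sandwich_diff: "sandwich s k u v (x - y) = sandwich s k u v x - sandwich s k u v y"
  by (auto simp: sandwich_def fun_eq_iff algebra_simps)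

lemma sandwich_monomial: "sandwich s k u v (monomial s' k' w) = monomial (s * s') (k + k') (u @ w @ v)"
  by (auto simp: sandwich_def monomial_def fun_eq_iff algebra_simps)

lemma sandwich_sandwich:
  "sandwich s k u v (sandwich s' k' u' v' c) = sandwich (s * s') (k + k') (u @ u') (v' @ v) c"
proof (intro ext)
  fix K \<gamma>
  show "sandwich s k u v (sandwich s' k' u' v' c) K \<gamma> = sandwich (s * s') (k + k') (u @ u') (v' @ v) c K \<gamma>"
  proof (cases "\<exists>\<delta>. \<gamma> = (u @ u') @ \<delta> @ (v' @ v)")
    case True
    then obtain \<delta> where \<delta>: "\<gamma> = (u @ u') @ \<delta> @ (v' @ v)" by blast
    then have "\<gamma> = u @ (u' @ \<delta> @ v') @ v" by simp
    then have "sandwich s k u v (sandwich s' k' u' v' c) K \<gamma> = s * (s' * c (K - k - k') \<delta>)"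
      by (simp only: sandwich_app)
    moreover have "sandwich (s * s') (k + k') (u @ u') (v' @ v) c K \<gamma> = s * s' * c (K - (k + k')) \<delta>"
      using \<delta> by (simp only: sandwich_app)
    ultimately show ?thesis by (simp add: algebra_simps)
  next
    case False
    then have "\<nexists>\<delta>'. \<delta> = u' @ \<delta>' @ v'" if "\<gamma> = u @ \<delta> @ v" for \<delta> using that by auto
    then have "sandwich s k u v (sandwich s' k' u' v' c) K \<gamma> = 0"
      by (cases "\<exists>\<delta>. \<gamma> = u @ \<delta> @ v") (auto simp: sandwich_eq_0)
    then show ?thesis using False by (simp add: sandwich_eq_0)
  qed
qed

lemma cmul_monomial_left: "cmul (monomial s k u) c = sandwich s k u [] c"
proof (intro ext)
  fix K \<gamma>
  have "cmul (monomial s k u) c K \<gamma> = (\<Sum>i\<le>length \<gamma>. monomial s k u k (take i \<gamma>) * c (K - k) (drop i \<gamma>))"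
    unfolding cmul_def by (rule infsum_eq_single) (simp add: monomial_def)
  also have "\<dots> = (\<Sum>i\<le>length \<gamma>. if i = length u then
      (if take (length u) \<gamma> = u then s * c (K - k) (drop (length u) \<gamma>) else 0) else 0)"
    by (rule sum.cong) (auto simp: monomial_def)
  also have "\<dots> = sandwich s k u [] c K \<gamma>"
    unfolding sandwich_left by (auto simp: sum.delta' dest: arg_cong[of _ _ length])
  finally show "cmul (monomial s k u) c K \<gamma> = sandwich s k u [] c K \<gamma>" .
qed

lemma cmul_monomial_right: "cmul c (monomial s k v) = sandwich s k [] v c"
proof (intro ext)
  fix K \<gamma>
  have "cmul c (monomial s k v) K \<gamma> = (\<Sum>i\<le>length \<gamma>. c (K - k) (take i \<gamma>) * monomial s k v (K - (K - k)) (drop i \<gamma>))"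
    unfolding cmul_def by (rule infsum_eq_single) (auto simp: monomial_def)
  also have "\<dots> = (\<Sum>i\<le>length \<gamma>. if i = length \<gamma> - length v then
      (if drop (length \<gamma> - length v) \<gamma> = v then s * c (K - k) (take (length \<gamma> - length v) \<gamma>) else 0) else 0)"
    by (rule sum.cong) (auto simp: monomial_def)
  also have "\<dots> = sandwich s k [] v c K \<gamma>"
    unfolding sandwich_right by (auto simp: sum.delta')
  finally show "cmul c (monomial s k v) K \<gamma> = sandwich s k [] v c K \<gamma>" .
qed

lemma sandwich_wnorm_le:
  assumes W: "weight_family W" and w: "w \<in> W" and c: "c \<in> weighted_l1 n W"
    and M: "\<And>K \<delta>. w (K + k) (u @ \<delta> @ v) \<le> M * w K \<delta>"
  shows "(\<lambda>(K, \<gamma>). norm (sandwich s k u v c K \<gamma>) * w K \<gamma>) summable_on UNIV"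
    and "wnorm w (sandwich s k u v c) \<le> norm s * M * wnorm w c"
proof -
  define h where "h = (\<lambda>(K::int, \<delta>::nat list). (K + k, u @ \<delta> @ v))"
  let ?f = "\<lambda>(K, \<gamma>). norm (sandwich s k u v c K \<gamma>) * w K \<gamma>"
  let ?g = "\<lambda>(K, \<delta>). norm s * M * (norm (c K \<delta>) * w K \<delta>)"
  have inj: "inj h" unfolding h_def inj_def by auto
  have outside: "?f p = 0" if "p \<notin> range h" for p
  proof -
    have "snd p \<noteq> u @ \<delta> @ v" for \<delta>
    proof
      assume "snd p = u @ \<delta> @ v"
      then have "p = h (fst p - k, \<delta>)" by (cases p) (simp add: h_def)
      then show False using that by blast
    qed
    then show ?thesis by (auto simp: case_prod_unfold sandwich_eq_0)
  qed
  have g: "?g summable_on UNIV"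
    using summable_on_cmult_right[OF weighted_l1_summable[OF c w], of "norm s * M"] by (simp add: case_prod_unfold)
  have le: "(?f \<circ> h) p \<le> ?g p" for p
  proof -
    have "norm (c (fst p) (snd p)) * w (fst p + k) (u @ snd p @ v) \<le> norm (c (fst p) (snd p)) * (M * w (fst p) (snd p))"
      using M by (rule mult_left_mono) simp
    then have "norm s * (norm (c (fst p) (snd p)) * w (fst p + k) (u @ snd p @ v)) \<le>
        norm s * (norm (c (fst p) (snd p)) * (M * w (fst p) (snd p)))"
      by (rule mult_left_mono) simp
    then show ?thesis by (cases p) (simp add: h_def norm_mult ac_simps)
  qed
  have fh: "(?f \<circ> h) summable_on UNIV"
    by (rule summable_on_comparison_test[OF g le]) (use weight_nonneg[OF W w] in \<open>auto simp: h_def\<close>)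
  then show "?f summable_on UNIV" using reindex_neutral(1)[of h ?f, OF inj outside] by blast
  have "wnorm w (sandwich s k u v c) = infsum (?f \<circ> h) UNIV"
    unfolding wnorm_def by (rule reindex_neutral(2)[of h ?f, OF inj outside])
  also have "\<dots> \<le> infsum ?g UNIV" by (rule infsum_mono[OF fh g le])
  also have "\<dots> = norm s * M * wnorm w c"
    unfolding wnorm_def by (simp add: case_prod_unfold infsum_cmult_right')
  finally show "wnorm w (sandwich s k u v c) \<le> norm s * M * wnorm w c" .
qed

lemma sandwich_weighted_l1:
  assumes W: "weight_family W" and c: "c \<in> weighted_l1 n W" and "u \<in> words n" "v \<in> words n"
  shows "sandwich s k u v c \<in> weighted_l1 n W"
proof (rule weighted_l1I)
  fix K \<gamma> assume \<gamma>: "\<gamma> \<notin> words n"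
  show "sandwich s k u v c K \<gamma> = 0"
  proof (cases "\<exists>\<delta>. \<gamma> = u @ \<delta> @ v")
    case True
    then obtain \<delta> where "\<gamma> = u @ \<delta> @ v" by blast
    then show ?thesis using \<gamma> assms(3,4) weighted_l1D[OF c] by simp
  qed (simp add: sandwich_eq_0)
qed (rule sandwich_wnorm_le(1)[OF W _ c weight_sandwich_le[OF W]])

lemma continuous_map_sandwich:
  assumes W: "weight_family W" and uv: "u \<in> words n" "v \<in> words n"
  shows "continuous_map (l1_topology n W) (l1_topology n W) (sandwich s k u v)"
proof (rule continuous_map_seminorm_topology[OF seminorm_family_weighted_l1[OF W] seminorm_family_weighted_l1[OF W]])
  show "sandwich s k u v x \<in> weighted_l1 n W" if "x \<in> weighted_l1 n W" for x
    using sandwich_weighted_l1[OF W that uv] .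
  show "sandwich s k u v y - sandwich s k u v x = sandwich s k u v (y - x)" for x y
    by (simp add: sandwich_diff)
  fix q assume "q \<in> wnorm ` W"
  then obtain w where w: "w \<in> W" "q = wnorm w" by blast
  let ?C = "norm s * (w k u * w 0 v) + 1"
  have "q (sandwich s k u v z) \<le> ?C * wnorm w z" if z: "z \<in> weighted_l1 n W" for z
  proof -
    have "q (sandwich s k u v z) \<le> norm s * (w k u * w 0 v) * wnorm w z"
      using sandwich_wnorm_le(2)[where M = "w k u * w 0 v", OF W w(1) z weight_sandwich_le[OF W w(1)]] w(2)
      by (simp add: mult.assoc)
    also have "\<dots> \<le> ?C * wnorm w z" using wnorm_nonneg[OF W w(1)] by (simp add: algebra_simps)
    finally show ?thesis .
  qed
  moreover have "0 < ?C" using weight_nonneg[OF W w(1)] by (simp add: add_nonneg_pos)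
  ultimately show "\<exists>p\<in>wnorm ` W. \<exists>C>0. \<forall>z\<in>weighted_l1 n W. q (sandwich s k u v z) \<le> C * p z"
    using w by blast
qed

section \<open>Closed ideals\<close>

lemma slice_summable:
  assumes W: "weight_family W" and a: "a \<in> weighted_l1 n W" and c: "c \<in> weighted_l1 n W"
  shows "(\<lambda>k. a k \<beta> * c (K - k) \<delta>) summable_on UNIV"
proof -
  obtain w where w: "w \<in> W" using weight_familyD(1)[OF W] by blast
  have a_summable: "(\<lambda>k. norm (a k \<beta>) * w k \<beta>) summable_on UNIV"
    using summable_on_reindex[of "\<lambda>k. (k, \<beta>)" UNIV "\<lambda>(k, \<alpha>). norm (a k \<alpha>) * w k \<alpha>"]
      summable_on_subset[OF weighted_l1_summable[OF a w], of "range (\<lambda>k. (k, \<beta>))"]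
    by (simp add: inj_def o_def)
  define C where "C = wnorm w c / w 0 \<delta> / w 0 \<beta>"
  have "norm (a k \<beta> * c (K - k) \<delta>) \<le> C * (norm (a k \<beta>) * w k \<beta>)" for k
  proof -
    have w0: "0 < w 0 \<delta>" "w 0 \<delta> \<le> w (K - k) \<delta>" "0 < w 0 \<beta>" "w 0 \<beta> \<le> w k \<beta>"
      using weight_familyD(2,3)[OF W w] by auto
    have c_le: "norm (c (K - k) \<delta>) * w 0 \<delta> \<le> wnorm w c"
      using coeff_le_wnorm[OF W c w, of "K - k" \<delta>] w0 by (meson mult_left_mono norm_ge_zero order_trans)
    have a_le: "norm (a k \<beta>) * w 0 \<beta> \<le> norm (a k \<beta>) * w k \<beta>" using w0 by (simp add: mult_left_mono)
    have "norm (a k \<beta>) * w 0 \<beta> * (norm (c (K - k) \<delta>) * w 0 \<delta>) \<le> norm (a k \<beta>) * w k \<beta> * wnorm w c"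
      by (rule mult_mono[OF a_le c_le]) (use w0 in \<open>auto intro: mult_nonneg_nonneg\<close>)
    then show ?thesis using w0 by (simp add: C_def norm_mult field_simps)
  qed
  then have "(\<lambda>k. norm (a k \<beta> * c (K - k) \<delta>)) summable_on UNIV"
    by (rule summable_on_comparison_test[OF summable_on_cmult_right[OF a_summable]]) simp
  then show ?thesis by (rule abs_summable_summable)
qed

lemma infsum_slices:
  fixes g :: "nat \<Rightarrow> int \<Rightarrow> complex"
  assumes g: "\<And>i. g i summable_on UNIV"
  shows "(\<Sum>\<^sub>\<infinity>p. \<Sum>i\<le>L. if snd p = \<sigma> i then g i (fst p) else 0) = (\<Sum>i\<le>L. \<Sum>\<^sub>\<infinity>k. g i k)"
proof -
  define G where "G i p = (if snd p = \<sigma> i then g i (fst p) else 0)" for i p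
  have "G i summable_on UNIV \<and> infsum (G i) UNIV = infsum (g i) UNIV" for i
  proof -
    have "inj (\<lambda>k. (k, \<sigma> i))" by (simp add: inj_def)
    moreover have "G i p = 0" if "p \<notin> range (\<lambda>k. (k, \<sigma> i))" for p
      using that by (cases p) (auto simp: G_def)
    moreover have "G i \<circ> (\<lambda>k. (k, \<sigma> i)) = g i" by (simp add: fun_eq_iff G_def)
    ultimately show ?thesis using reindex_neutral g by metis
  qed
  then show ?thesis using infsum_finite_sum(2)[of "{..L}" G UNIV] by (simp add: G_def)
qed

lemma cmul_eq_series_left:
  assumes W: "weight_family W" and a: "a \<in> weighted_l1 n W" and c: "c \<in> weighted_l1 n W"
  shows "cmul a c K \<gamma> = (\<Sum>\<^sub>\<infinity>p. sandwich (a (fst p) (snd p)) (fst p) (snd p) [] c K \<gamma>)"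
proof -
  define L where "L = length \<gamma>"
  define g where "g i k = a k (take i \<gamma>) * c (K - k) (drop i \<gamma>)" for i k
  have g: "g i summable_on UNIV" for i unfolding g_def by (rule slice_summable[OF W a c])
  have "cmul a c K \<gamma> = (\<Sum>\<^sub>\<infinity>k. \<Sum>i\<le>L. g i k)" unfolding cmul_def g_def L_def ..
  also have "\<dots> = (\<Sum>i\<le>L. \<Sum>\<^sub>\<infinity>k. g i k)" using infsum_finite_sum(2)[of "{..L}" g UNIV] g by simp
  moreover have "sandwich (a k \<beta>) k \<beta> [] c K \<gamma> = (\<Sum>i\<le>L. if \<beta> = take i \<gamma> then g i k else 0)" for k \<beta>
  proof -
    have "(\<Sum>i\<le>L. if \<beta> = take i \<gamma> then g i k else 0) =
        (\<Sum>i\<le>L. if i = length \<beta> then (if take (length \<beta>) \<gamma> = \<beta> then g i k else 0) else 0)"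
      by (rule sum.cong) (auto simp: L_def min_def)
    also have "\<dots> = sandwich (a k \<beta>) k \<beta> [] c K \<gamma>"
      by (auto simp: sum.delta' sandwich_left g_def L_def dest: arg_cong[of _ _ length])
    finally show ?thesis by simp
  qed
  ultimately show ?thesis using infsum_slices[OF g, where L = L and \<sigma> = "\<lambda>i. take i \<gamma>"] by simp
qed

lemma cmul_eq_series_right:
  assumes W: "weight_family W" and a: "a \<in> weighted_l1 n W" and c: "c \<in> weighted_l1 n W"
  shows "cmul c a K \<gamma> = (\<Sum>\<^sub>\<infinity>p. sandwich (a (fst p) (snd p)) (fst p) [] (snd p) c K \<gamma>)"
proof -
  define L where "L = length \<gamma>"
  define g where "g i k = c (K - k) (take i \<gamma>) * a k (drop i \<gamma>)" for i k
  have g: "g i summable_on UNIV" for i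
    unfolding g_def using slice_summable[OF W a c] by (simp add: mult.commute)
  have bij: "bij_betw (\<lambda>k. K - k) UNIV (UNIV :: int set)"
    by (rule bij_betwI[where g = "\<lambda>k. K - k"]) auto
  have "cmul c a K \<gamma> = (\<Sum>\<^sub>\<infinity>k. \<Sum>i\<le>L. g i k)"
    unfolding cmul_def L_def g_def
    using infsum_reindex_bij_betw[OF bij, of "\<lambda>j. \<Sum>i\<le>length \<gamma>. c j (take i \<gamma>) * a (K - j) (drop i \<gamma>)"]
    by simp
  also have "\<dots> = (\<Sum>i\<le>L. \<Sum>\<^sub>\<infinity>k. g i k)" using infsum_finite_sum(2)[of "{..L}" g UNIV] g by simp
  finally have lhs: "cmul c a K \<gamma> = (\<Sum>i\<le>L. \<Sum>\<^sub>\<infinity>k. g i k)" .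
  moreover have "sandwich (a k \<beta>) k [] \<beta> c K \<gamma> = (\<Sum>i\<le>L. if \<beta> = drop i \<gamma> then g i k else 0)" for k \<beta>
  proof -
    have "(\<Sum>i\<le>L. if \<beta> = drop i \<gamma> then g i k else 0) =
        (\<Sum>i\<le>L. if i = L - length \<beta> then (if drop (L - length \<beta>) \<gamma> = \<beta> then g i k else 0) else 0)"
      by (rule sum.cong) (auto simp: L_def)
    also have "\<dots> = sandwich (a k \<beta>) k [] \<beta> c K \<gamma>"
      by (auto simp: sum.delta' sandwich_right g_def L_def)
    finally show ?thesis by simp
  qed
  ultimately show ?thesis using infsum_slices[OF g, where L = L and \<sigma> = "\<lambda>i. drop i \<gamma>"] by simp
qed

text \<open>
  Split \<open>a = \<Sum> a\<^sub>p z\<^sup>k \<zeta>\<^sub>\<beta>\<close> into monomials; the pieces of \<open>a x\<close> (or \<open>x a\<close>) lie in \<open>I\<close> and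
  form an absolutely convergent series.\<close>

lemma sandwich_series_mem:
  assumes W: "weight_family W" and I: "closedin (l1_topology n W) I" "I \<subseteq> weighted_l1 n W" "0 \<in> I"
    "\<And>x y. x \<in> I \<Longrightarrow> y \<in> I \<Longrightarrow> x + y \<in> I" "sandwich_closed n I"
    and a: "a \<in> weighted_l1 n W" and x: "x \<in> I"
    and split: "\<And>\<beta>. u \<beta> @ v \<beta> = \<beta>" "\<And>\<beta>. u \<beta> = [] \<or> v \<beta> = []"
  shows "(\<lambda>K \<gamma>. \<Sum>\<^sub>\<infinity>p. sandwich (a (fst p) (snd p)) (fst p) (u (snd p)) (v (snd p)) x K \<gamma>) \<in> I"
proof -
  define t where "t p = sandwich (a (fst p) (snd p)) (fst p) (u (snd p)) (v (snd p)) x" for p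
  have xA: "x \<in> weighted_l1 n W" using I(2) x by blast
  have tI: "t p \<in> I" for p
  proof (cases "snd p \<in> words n")
    case True
    then have "u (snd p) @ v (snd p) \<in> words n" using split(1)[of "snd p"] by simp
    then have "u (snd p) \<in> words n" "v (snd p) \<in> words n" by simp_all
    then show ?thesis using I(5) x unfolding t_def sandwich_closed_def by blast
  qed (simp add: t_def weighted_l1D[OF a] I(3))
  have tA: "t p \<in> weighted_l1 n W" for p using tI I(2) by blast
  have summable: "(\<lambda>p. wnorm w (t p)) summable_on UNIV" if w: "w \<in> W" for w
  proof (rule summable_on_comparison_test[OF summable_on_cmult_left[OF weighted_l1_summable[OF a w]]])
    fix p :: "int \<times> nat list"
    have "wnorm w (t p) \<le> norm (a (fst p) (snd p)) * w (fst p) (snd p) * wnorm w x"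
      unfolding t_def
      by (rule sandwich_wnorm_le(2)[OF W w xA weight_split_le[OF W w split(1)[of "snd p"] split(2)[of "snd p"]]])
    then show "wnorm w (t p) \<le> (case p of (k, \<alpha>) \<Rightarrow> norm (a k \<alpha>) * w k \<alpha>) * wnorm w x"
      by (simp add: case_prod_unfold)
  qed (rule wnorm_nonneg[OF W w])
  have "(\<lambda>K \<gamma>. \<Sum>\<^sub>\<infinity>p. t p K \<gamma>) \<in> I"
    by (rule series_mem_closedin[OF W tA summable I(1) I(3) I(4) tI])
  then show ?thesis by (simp add: t_def)
qed

lemma two_sided_ideal_if_sandwich_closed:
  assumes W: "weight_family W" and I: "closedin (l1_topology n W) I" "I \<subseteq> weighted_l1 n W" "0 \<in> I"
    "\<And>x y. x \<in> I \<Longrightarrow> y \<in> I \<Longrightarrow> x + y \<in> I" "sandwich_closed n I"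
  shows "two_sided_ideal (weighted_l1 n W) I"
  unfolding two_sided_ideal_def
proof (intro conjI ballI)
  show "I \<subseteq> weighted_l1 n W" "0 \<in> I" by (fact I(2), fact I(3))
  show "x + y \<in> I" if "x \<in> I" "y \<in> I" for x y using I(4) that .
next
  fix a x assume a: "a \<in> weighted_l1 n W" and x: "x \<in> I"
  have xA: "x \<in> weighted_l1 n W" using I(2) x by blast
  have "cmul a x = (\<lambda>K \<gamma>. \<Sum>\<^sub>\<infinity>p. sandwich (a (fst p) (snd p)) (fst p) (snd p) [] x K \<gamma>)"
    by (intro ext cmul_eq_series_left[OF W a xA])
  then show "cmul a x \<in> I" using sandwich_series_mem[OF W I a x, of "\<lambda>\<beta>. \<beta>" "\<lambda>_. []"] by simp
  have "cmul x a = (\<lambda>K \<gamma>. \<Sum>\<^sub>\<infinity>p. sandwich (a (fst p) (snd p)) (fst p) [] (snd p) x K \<gamma>)"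
    by (intro ext cmul_eq_series_right[OF W a xA])
  then show "cmul x a \<in> I" using sandwich_series_mem[OF W I a x, of "\<lambda>_. []" "\<lambda>\<beta>. \<beta>"] by simp
qed

lemma two_sided_ideal_weighted_l1:
  assumes W: "weight_family W"
  shows "two_sided_ideal (weighted_l1 n W) (weighted_l1 n W)"
proof (rule two_sided_ideal_if_sandwich_closed[OF W])
  show "closedin (l1_topology n W) (weighted_l1 n W)"
    using closedin_topspace[of "l1_topology n W"] by (simp add: topspace_l1_topology[OF W])
  show "sandwich_closed n (weighted_l1 n W)"
    unfolding sandwich_closed_def using sandwich_weighted_l1[OF W] by blast
qed (simp_all add: weighted_l1_zero weighted_l1_add[OF W])

lemma cmul_weighted_l1:
  "weight_family W \<Longrightarrow> a \<in> weighted_l1 n W \<Longrightarrow> c \<in> weighted_l1 n W \<Longrightarrow> cmul a c \<in> weighted_l1 n W"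
  using two_sided_ideal_weighted_l1 unfolding two_sided_ideal_def by blast

lemma
  assumes W: "weight_family W" and I: "two_sided_ideal (weighted_l1 n W) I"
  shows two_sided_ideal_sandwich_closed: "sandwich_closed n I"
    and two_sided_ideal_add_subgroup: "add_subgroup I"
proof -
  have mult: "cmul a x \<in> I" "cmul x a \<in> I" if "a \<in> weighted_l1 n W" "x \<in> I" for a x
    using I that unfolding two_sided_ideal_def by blast+
  have "sandwich s k u v x = cmul (monomial s k u) (cmul x (monomial 1 0 v))" for s k u v x
    by (simp add: cmul_monomial_left cmul_monomial_right sandwich_sandwich)
  moreover have "cmul (monomial s k u) (cmul x (monomial 1 0 v)) \<in> I"
    if "u \<in> words n" "v \<in> words n" "x \<in> I" for s k u v x
    using mult monomial_weighted_l1 that by blast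
  ultimately show closed: "sandwich_closed n I" unfolding sandwich_closed_def by simp
  show "add_subgroup I"
  proof (rule add_subgroupI)
    show "0 \<in> I" "\<And>x y. x \<in> I \<Longrightarrow> y \<in> I \<Longrightarrow> x + y \<in> I"
      using I unfolding two_sided_ideal_def by blast+
    fix x assume "x \<in> I"
    then have "sandwich (- 1) 0 [] [] x \<in> I" using closed unfolding sandwich_closed_def by simp
    then show "- x \<in> I" by (simp add: sandwich_uminus_one)
  qed
qed

lemma two_sided_ideal_Inter:
  assumes "F \<noteq> {}" "\<And>I. I \<in> F \<Longrightarrow> two_sided_ideal A I"
  shows "two_sided_ideal A (\<Inter>F)"
  using assms unfolding two_sided_ideal_def by blast

lemma
  assumes W: "weight_family W" and S: "S \<subseteq> weighted_l1 n W"
  defines "J \<equiv> closed_ideal_gen (weighted_l1 n W) (l1_topology n W) S"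
  shows closedin_closed_ideal_gen: "closedin (l1_topology n W) J"
    and two_sided_ideal_closed_ideal_gen: "two_sided_ideal (weighted_l1 n W) J"
    and closed_ideal_gen_superset: "S \<subseteq> J"
    and closed_ideal_gen_least:
      "\<And>I. S \<subseteq> I \<Longrightarrow> two_sided_ideal (weighted_l1 n W) I \<Longrightarrow> closedin (l1_topology n W) I \<Longrightarrow> J \<subseteq> I"
proof -
  let ?F = "{I. S \<subseteq> I \<and> two_sided_ideal (weighted_l1 n W) I \<and> closedin (l1_topology n W) I}"
  have whole: "weighted_l1 n W \<in> ?F"
    using S two_sided_ideal_weighted_l1[OF W] closedin_topspace[of "l1_topology n W"]
    by (simp add: topspace_l1_topology[OF W])
  show "S \<subseteq> J"
    "\<And>I. S \<subseteq> I \<Longrightarrow> two_sided_ideal (weighted_l1 n W) I \<Longrightarrow> closedin (l1_topology n W) I \<Longrightarrow> J \<subseteq> I"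
    unfolding J_def closed_ideal_gen_def using whole by blast+
  show "closedin (l1_topology n W) J"
    unfolding J_def closed_ideal_gen_def by (rule closedin_Inter) (use whole in auto)
  show "two_sided_ideal (weighted_l1 n W) J"
    unfolding J_def closed_ideal_gen_def by (rule two_sided_ideal_Inter) (use whole in auto)
qed

section \<open>Switches, inversions and canonical words\<close>

fun switch_count :: "nat list \<Rightarrow> nat" where
  "switch_count (x # y # xs) = (if x = y then 0 else 1) + switch_count (y # xs)"
| "switch_count _ = 0"

lemma card_switch_positions: "card {i. Suc i < length \<alpha> \<and> \<alpha> ! i \<noteq> \<alpha> ! Suc i} = switch_count \<alpha>"
proof (induction \<alpha> rule: switch_count.induct)
  case (1 x y xs)
  let ?S = "{i. Suc i < length (y # xs) \<and> (y # xs) ! i \<noteq> (y # xs) ! Suc i}"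
  have eq: "{i. Suc i < length (x # y # xs) \<and> (x # y # xs) ! i \<noteq> (x # y # xs) ! Suc i} =
      {i. i = 0 \<and> x \<noteq> y} \<union> Suc ` ?S" (is "?L = ?R")
  proof (rule set_eqI)
    show "i \<in> ?L \<longleftrightarrow> i \<in> ?R" for i by (cases i) (auto simp: image_iff)
  qed
  have fin: "finite ?S" by (rule finite_subset[of _ "{..<length (y # xs)}"]) auto
  have cS: "card (Suc ` ?S) = card ?S" by (rule card_image) simp
  show ?case
  proof (cases "x = y")
    case True
    then have "{i. i = 0 \<and> x \<noteq> y} \<union> Suc ` ?S = Suc ` ?S" by simp
    then show ?thesis using eq cS 1 True by simp
  next
    case False
    then have "{i. i = 0 \<and> x \<noteq> y} \<union> Suc ` ?S = insert 0 (Suc ` ?S)" by auto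
    moreover have "card (insert 0 (Suc ` ?S)) = Suc (card (Suc ` ?S))"
      by (rule card_insert_disjoint) (use fin in auto)
    ultimately show ?thesis using eq cS 1 False by simp
  qed
qed simp_all

lemma switches_eq_switch_count: "switches \<alpha> = (if \<alpha> = [] then -1 else int (switch_count \<alpha>))"
proof (cases "length \<alpha> \<le> 1")
  case True
  then have "\<alpha> = [] \<or> (\<exists>x. \<alpha> = [x])" by (cases \<alpha>) auto
  then show ?thesis unfolding switches_def by auto
next
  case False
  then show ?thesis unfolding switches_def using card_switch_positions[of \<alpha>] by auto
qed

lemma switch_count_const: "\<forall>x\<in>set xs. x = c \<Longrightarrow> switch_count xs = 0"
proof (induction xs rule: switch_count.induct)
  case (1 x y xs) then show ?case by simp
qed simp_all

lemma switch_count_replicate [simp]: "switch_count (replicate q c) = 0"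
  by (rule switch_count_const[of _ c]) simp

lemma switch_count_append_le: "switch_count (\<alpha> @ \<beta>) \<le> switch_count \<alpha> + switch_count \<beta> + 1"
proof (induction \<alpha> rule: switch_count.induct)
  case ("2_2" v)
  then show ?case by (cases \<beta>) auto
qed simp_all

lemma switch_count_append_ge: "switch_count \<alpha> + switch_count \<beta> \<le> switch_count (\<alpha> @ \<beta>)"
proof (induction \<alpha> rule: switch_count.induct)
  case ("2_2" v)
  then show ?case by (cases \<beta>) auto
qed simp_all

lemma switches_ge_minus_one: "switches \<alpha> \<ge> -1"
  by (simp add: switches_eq_switch_count)

lemma switches_append_le: "switches (\<alpha> @ \<beta>) \<le> switches \<alpha> + switches \<beta> + 1"
  using switch_count_append_le[of \<alpha> \<beta>] by (auto simp: switches_eq_switch_count)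

fun inversions :: "nat list \<Rightarrow> nat" where
  "inversions [] = 0"
| "inversions (x # xs) = length (filter (\<lambda>y. y < x) xs) + inversions xs"

definition cross_inversions :: "nat list \<Rightarrow> nat list \<Rightarrow> nat" where
  "cross_inversions xs ys = sum_list (map (\<lambda>x. length (filter (\<lambda>y. y < x) ys)) xs)"

lemma cross_inversions_simps[simp]:
  "cross_inversions [] ys = 0" "cross_inversions (x # xs) ys = length (filter (\<lambda>y. y < x) ys) + cross_inversions xs ys"
  by (simp_all add: cross_inversions_def)

lemma cross_inversions_append_right: "cross_inversions xs (ys @ zs) = cross_inversions xs ys + cross_inversions xs zs"
  by (induction xs) auto

lemma inversions_append: "inversions (xs @ ys) = inversions xs + inversions ys + cross_inversions xs ys"
  by (induction xs) auto

lemma inversions_replicate[simp]: "inversions (replicate q c) = 0"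
  by (induction q) auto

lemma cross_inversions_replicate: "cross_inversions (replicate q c) ys = q * length (filter (\<lambda>y. y < c) ys)"
  by (induction q) auto

lemma cross_inversions_eq_0: "\<forall>x\<in>set xs. x \<le> c \<Longrightarrow> \<forall>y\<in>set ys. c \<le> y \<Longrightarrow> cross_inversions xs ys = 0"
proof (induction xs)
  case (Cons x xs)
  have "filter (\<lambda>y. y < x) ys = []" using Cons.prems by (fastforce simp: filter_empty_conv)
  then show ?case using Cons by simp
qed simp

lemma inversions_swap_adjacent:
  assumes "i < j"
  shows "inversions (u @ [j, i] @ v) = Suc (inversions (u @ [i, j] @ v))"
proof -
  have "cross_inversions u ([j, i] @ v) = cross_inversions u ([i, j] @ v)" by (induction u) auto
  then show ?thesis using assms by (simp add: inversions_append)
qed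

lemma inversions_eq_0_iff_sorted: "inversions xs = 0 \<longleftrightarrow> sorted xs"
  by (induction xs) (auto simp: filter_empty_conv not_less)

lemma adjacent_inversion:
  assumes "0 < inversions xs"
  shows "\<exists>u i j v. xs = u @ [j, i] @ v \<and> i < j"
  using assms
proof (induction xs)
  case Nil then show ?case by simp
next
  case (Cons x xs)
  show ?case
  proof (cases "0 < inversions xs")
    case True
    then obtain u i j v where "xs = u @ [j, i] @ v" "i < j" using Cons.IH by blast
    then show ?thesis by (intro exI[of _ "x # u"]) auto
  next
    case False
    then have s: "sorted xs" using inversions_eq_0_iff_sorted by simp
    have "filter (\<lambda>y. y < x) xs \<noteq> []" using Cons.prems False by auto
    then obtain y where y: "y \<in> set xs" "y < x" by (auto simp: filter_empty_conv)
    then obtain y0 rest where xs: "xs = y0 # rest" by (cases xs) auto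
    have "y0 \<le> y" using s y xs by auto
    then have "x # xs = [] @ [x, y0] @ rest \<and> y0 < x" using xs y by simp
    then show ?thesis by blast
  qed
qed

lemma sort_eq_if_mset_eq: "mset xs = mset ys \<Longrightarrow> sort xs = sort ys"
  by (metis properties_for_sort mset_sort sorted_sort)

text \<open>
  Insert \<open>a\<close> copies of a letter \<open>c\<close>, larger than all letters of \<open>xs\<close>, so as to create exactly
  \<open>d\<close> inversions: \<open>d div |xs|\<close> copies go in front, one copy goes before the last \<open>d mod |xs|\<close>
  letters, and the remaining copies go to the end. This costs at most four switches.\<close>

definition insert_copies :: "nat \<Rightarrow> nat \<Rightarrow> nat \<Rightarrow> nat list \<Rightarrow> nat list" where
  "insert_copies c a d xs = (let q = d div length xs; s = d mod length xs in
     if a \<le> q then replicate a c @ xs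
     else replicate q c @ take (length xs - s) xs @ [c] @ drop (length xs - s) xs @ replicate (a - q - 1) c)"

lemma mset_insert_copies: "mset (insert_copies c a d xs) = mset xs + replicate_mset a c"
proof (cases "a \<le> d div length xs")
  case False
  have "replicate_mset (p + q) c = replicate_mset p c + replicate_mset q c" for p q
    by (induction p) auto
  moreover have "a = d div length xs + Suc (a - d div length xs - 1)" using False by simp
  ultimately have "replicate_mset a c =
      replicate_mset (d div length xs) c + add_mset c (replicate_mset (a - d div length xs - 1) c)"
    by (metis replicate_mset_Suc)
  moreover have "mset (take m xs) + mset (drop m xs) = mset xs" for m
    by (metis append_take_drop_id mset_append)
  ultimately show ?thesis using False by (simp add: insert_copies_def Let_def add_ac)
qed (simp add: insert_copies_def Let_def)

lemma switch_count_insert_copies: "switch_count (insert_copies c a d xs) \<le> switch_count xs + 4"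
proof (cases "a \<le> d div length xs")
  case True
  then show ?thesis
    using switch_count_append_le[of "replicate a c" xs] by (simp add: insert_copies_def Let_def)
next
  case False
  define T where "T = take (length xs - d mod length xs) xs"
  define D where "D = drop (length xs - d mod length xs) xs"
  define R where "R = replicate (a - d div length xs - 1) c"
  have "insert_copies c a d xs = replicate (d div length xs) c @ (T @ ([c] @ (D @ R)))"
    using False by (simp add: insert_copies_def Let_def T_def D_def R_def)
  moreover have "switch_count (replicate (d div length xs) c @ (T @ ([c] @ (D @ R)))) \<le>
      switch_count (replicate (d div length xs) c) + switch_count (T @ ([c] @ (D @ R))) + 1"
    by (rule switch_count_append_le)
  moreover have "switch_count (T @ ([c] @ (D @ R))) \<le> switch_count T + switch_count ([c] @ (D @ R)) + 1"
    by (rule switch_count_append_le)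
  moreover have "switch_count ([c] @ (D @ R)) \<le> switch_count [c] + switch_count (D @ R) + 1"
    by (rule switch_count_append_le)
  moreover have "switch_count (D @ R) \<le> switch_count D + switch_count R + 1"
    by (rule switch_count_append_le)
  moreover have "switch_count T + switch_count D \<le> switch_count xs"
    using switch_count_append_ge[of T D] by (simp add: T_def D_def)
  ultimately show ?thesis by (simp add: R_def)
qed

lemma inversions_insert_copies:
  assumes less: "\<forall>x\<in>set xs. x < c" and d: "d \<le> a * length xs"
  shows "inversions (insert_copies c a d xs) = inversions xs + d"
proof -
  define L where "L = length xs"
  define q where "q = d div L"
  define s where "s = d mod L"
  have dqs: "d = q * L + s" unfolding q_def s_def by simp
  have filter_less: "filter (\<lambda>y. y < c) ys = ys" if "set ys \<subseteq> set xs" for ys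
    using that less by (auto simp: filter_id_conv)
  show ?thesis
  proof (cases "a \<le> q")
    case True
    have "d = a * L"
    proof (cases "L = 0")
      case False
      have "a * L \<le> q * L" using True by simp
      also have "\<dots> \<le> d" by (simp add: dqs)
      finally show ?thesis using d by (simp add: L_def)
    qed (use d in \<open>simp add: L_def\<close>)
    moreover have "L = 0 \<Longrightarrow> xs = []" by (simp add: L_def)
    ultimately show ?thesis using True
      by (simp add: insert_copies_def Let_def q_def[symmetric] L_def[symmetric] inversions_append
          cross_inversions_replicate filter_less)
  next
    case False
    have "s \<le> L" by (cases "L = 0") (use d in \<open>simp_all add: s_def L_def less_imp_le\<close>)
    define T where "T = take (L - s) xs"
    define D where "D = drop (L - s) xs"
    define R where "R = replicate (a - q - 1) c"
    have TD: "T @ D = xs" by (simp add: T_def D_def)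
    have "length D = s" using \<open>s \<le> L\<close> by (simp add: D_def L_def)
    have sub: "set T \<subseteq> set xs" "set D \<subseteq> set xs" by (auto simp: T_def D_def dest: in_set_takeD in_set_dropD)
    then have le_c: "\<forall>x\<in>set T. x \<le> c" "\<forall>x\<in>set D. x \<le> c" using less by (auto simp: less_imp_le)
    have "insert_copies c a d xs = replicate q c @ T @ [c] @ D @ R"
      using False by (simp add: insert_copies_def Let_def q_def s_def L_def T_def D_def R_def)
    moreover have "cross_inversions T ([c] @ D @ R) = cross_inversions T D"
    proof -
      have "cross_inversions T [c] = 0" "cross_inversions T R = 0"
        using cross_inversions_eq_0[OF le_c(1)] by (simp_all add: R_def)
      then show ?thesis by (simp only: cross_inversions_append_right add_0 add_0_right)
    qed
    moreover have "cross_inversions D R = 0" using cross_inversions_eq_0[OF le_c(2)] by (simp add: R_def)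
    moreover have "length (filter (\<lambda>y. y < c) (T @ [c] @ D @ R)) = L"
      using filter_less[OF sub(1)] filter_less[OF sub(2)] TD by (simp add: R_def L_def flip: length_append)
    moreover have "length (filter (\<lambda>y. y < c) (D @ R)) = s"
      using filter_less[OF sub(2)] \<open>length D = s\<close> by (simp add: R_def)
    ultimately have "inversions (insert_copies c a d xs) = q * L + inversions T + cross_inversions T D + s + inversions D"
      by (simp add: inversions_append cross_inversions_replicate cross_inversions_append_right R_def
          del: append.simps; metis add_mult_distrib2)
    moreover have "inversions xs = inversions T + inversions D + cross_inversions T D"
      using TD inversions_append[of T D] by simp
    ultimately show ?thesis using dqs by simp
  qed
qed

text \<open>
  The letters \<open>m + 1\<close> are inserted into the canonical word of the smaller letters so as to
  recreate exactly the inversions they had in \<open>\<beta>\<close>.\<close>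

fun canon :: "nat \<Rightarrow> nat list \<Rightarrow> nat list" where
  "canon 0 \<beta> = filter (\<lambda>x. x = 0) \<beta>"
| "canon (Suc m) \<beta> = insert_copies (Suc m) (length (filter (\<lambda>x. x = Suc m) \<beta>))
     (inversions (filter (\<lambda>x. x \<le> Suc m) \<beta>) - inversions (filter (\<lambda>x. x \<le> m) \<beta>)) (canon m (filter (\<lambda>x. x \<le> m) \<beta>))"


lemma inversions_filter_less_max:
  assumes "\<forall>x\<in>set zs. x \<le> c"
  shows "inversions (filter (\<lambda>x. x < c) zs) \<le> inversions zs \<and>
    inversions zs \<le> inversions (filter (\<lambda>x. x < c) zs) + length (filter (\<lambda>x. x = c) zs) * length (filter (\<lambda>x. x < c) zs)"
  using assms
proof (induction zs)
  case Nil then show ?case by simp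
next
  case (Cons z zs)
  then have IH: "inversions (filter (\<lambda>x. x < c) zs) \<le> inversions zs"
    "inversions zs \<le> inversions (filter (\<lambda>x. x < c) zs) + length (filter (\<lambda>x. x = c) zs) * length (filter (\<lambda>x. x < c) zs)"
    by auto
  show ?case
  proof (cases "z = c")
    case True
    then show ?thesis using IH by simp
  next
    case False
    then have zc: "z < c" using Cons.prems by auto
    have "filter (\<lambda>y. y < z) (filter (\<lambda>x. x < c) zs) = filter (\<lambda>y. y < z) zs"
      using zc by (auto simp: filter_filter intro: filter_cong)
    then show ?thesis using IH zc False by (simp add: add_mono)
  qed
qed

lemma mset_filter_less_max:
  fixes zs :: "nat list"
  assumes "\<forall>x\<in>set zs. x \<le> c"
  shows "mset zs = mset (filter (\<lambda>x. x < c) zs) + replicate_mset (length (filter (\<lambda>x. x = c) zs)) c"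
  using assms
proof (induction zs)
  case (Cons z zs)
  then show ?case by (cases "z = c") auto
qed simp

lemma canon_invariants:
  "mset (canon m \<beta>) = mset (filter (\<lambda>x. x \<le> m) \<beta>) \<and>
   inversions (canon m \<beta>) = inversions (filter (\<lambda>x. x \<le> m) \<beta>) \<and> switch_count (canon m \<beta>) \<le> 4 * m"
proof (induction m arbitrary: \<beta>)
  case 0
  have "filter (\<lambda>x. x = 0) \<beta> = filter (\<lambda>x. x \<le> (0::nat)) \<beta>" by (rule filter_cong) auto
  moreover have "switch_count (filter (\<lambda>x. x = 0) \<beta>) = 0" by (rule switch_count_const) auto
  ultimately show ?case by simp
next
  case (Suc m)
  define le_m where "le_m = filter (\<lambda>x. x \<le> m) \<beta>"
  define le_Suc_m where "le_Suc_m = filter (\<lambda>x. x \<le> Suc m) \<beta>"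
  define xs where "xs = canon m le_m"
  define a where "a = length (filter (\<lambda>x. x = Suc m) \<beta>)"
  define d where "d = inversions le_Suc_m - inversions le_m"
  have le_m_filter: "filter (\<lambda>x. x \<le> m) le_m = le_m" by (simp add: le_m_def)
  have IH: "mset xs = mset le_m" "inversions xs = inversions le_m" "switch_count xs \<le> 4 * m"
    using Suc.IH[of le_m] le_m_filter by (auto simp: xs_def)
  have le_Suc_m_bound: "\<forall>x\<in>set le_Suc_m. x \<le> Suc m" by (simp add: le_Suc_m_def)
  have le_Suc_m_less: "filter (\<lambda>x. x < Suc m) le_Suc_m = le_m"
    unfolding le_Suc_m_def le_m_def filter_filter by (rule filter_cong) auto
  have le_Suc_m_count: "length (filter (\<lambda>x. x = Suc m) le_Suc_m) = a"
    unfolding le_Suc_m_def a_def filter_filter by (rule arg_cong[where f=length], rule filter_cong) auto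
  have length_xs: "length xs = length le_m" using IH(1) by (metis size_mset)
  have inversions_le_Suc_m:
      "inversions le_m \<le> inversions le_Suc_m" "inversions le_Suc_m \<le> inversions le_m + a * length le_m"
    using inversions_filter_less_max[OF le_Suc_m_bound] le_Suc_m_less le_Suc_m_count by auto
  have xs_less: "\<forall>x\<in>set xs. x < Suc m"
  proof
    fix x assume "x \<in> set xs"
    then have "x \<in> set le_m" using IH(1) by (metis set_mset_mset)
    then show "x < Suc m" by (simp add: le_m_def)
  qed
  have d_le: "d \<le> a * length xs" using inversions_le_Suc_m length_xs by (simp add: d_def)
  have canon_eq: "canon (Suc m) \<beta> = insert_copies (Suc m) a d xs" by (simp add: a_def d_def xs_def le_m_def le_Suc_m_def)
  have "mset (canon (Suc m) \<beta>) = mset le_Suc_m"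
    using mset_insert_copies IH(1) mset_filter_less_max[OF le_Suc_m_bound] le_Suc_m_less le_Suc_m_count canon_eq
    by simp
  moreover have "inversions (canon (Suc m) \<beta>) = inversions le_Suc_m"
    using inversions_insert_copies[OF xs_less d_le] IH(2) inversions_le_Suc_m(1) canon_eq by (simp add: d_def)
  moreover have "switch_count (canon (Suc m) \<beta>) \<le> 4 * Suc m"
    using switch_count_insert_copies[of "Suc m" a d xs] IH(3) unfolding canon_eq mult_Suc_right by linarith
  ultimately show ?case by (simp add: le_Suc_m_def)
qed

lemma words_filter: "\<beta> \<in> words n \<Longrightarrow> filter (\<lambda>x. x \<le> n) \<beta> = \<beta>"
  unfolding words_def by (auto simp: filter_id_conv)

lemma
  assumes "\<beta> \<in> words n"
  shows mset_canon: "mset (canon n \<beta>) = mset \<beta>"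
    and inversions_canon: "inversions (canon n \<beta>) = inversions \<beta>"
    and switches_canon_le: "switches (canon n \<beta>) \<le> 4 * int n"
    and canon_in_words: "canon n \<beta> \<in> words n"
    and length_canon: "length (canon n \<beta>) = length \<beta>"
proof -
  note p = canon_invariants[of n \<beta>] words_filter[OF assms]
  show m: "mset (canon n \<beta>) = mset \<beta>" using p by simp
  show "inversions (canon n \<beta>) = inversions \<beta>" using p by simp
  show "switches (canon n \<beta>) \<le> 4 * int n" using p by (auto simp: switches_eq_switch_count)
  have "set (canon n \<beta>) = set \<beta>" using m by (metis set_mset_mset)
  then show "canon n \<beta> \<in> words n" using assms unfolding words_def by simp
  show "length (canon n \<beta>) = length \<beta>" using m by (metis size_mset)
qed

section \<open>The commutation relations\<close>

lemma relations_eq: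
  "relations n = {monomial 1 0 [i, j] - monomial 1 1 [j, i] | i j. 1 \<le> i \<and> i < j \<and> j \<le> n}"
proof -
  have zeta: "zeta i = monomial 1 0 [i]" for i unfolding zeta_def monomial_def by auto
  have zvar: "zvar = monomial 1 1 []" unfolding zvar_def monomial_def by auto
  show ?thesis
    unfolding relations_def zeta zvar cmul_monomial_left sandwich_monomial by simp
qed

lemma relations_weighted_l1:
  assumes W: "weight_family W"
  shows "relations n \<subseteq> weighted_l1 n W"
proof
  fix x assume "x \<in> relations n"
  then obtain i j where x: "x = monomial 1 0 [i, j] - monomial 1 1 [j, i]" "1 \<le> i" "i < j" "j \<le> n"
    unfolding relations_eq by blast
  then have "[i, j] \<in> words n" "[j, i] \<in> words n" by (auto simp: words_def)
  then show "x \<in> weighted_l1 n W"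
    unfolding x(1) by (intro weighted_l1_diff[OF W] monomial_weighted_l1) auto
qed

text \<open>
  Modulo the relations, \<open>z\<^sup>k \<zeta>\<^sub>\<beta>\<close> only depends on the letters of \<open>\<beta>\<close> and on \<open>k - inv \<beta>\<close>:
  swapping an adjacent inversion \<open>j i\<close> into \<open>i j\<close> trades one inversion for one power of \<open>z\<close>.\<close>

lemma monomial_sort_mem:
  assumes W: "weight_family W" and I: "two_sided_ideal (weighted_l1 n W) I" "relations n \<subseteq> I"
    and \<beta>: "\<beta> \<in> words n"
  shows "monomial s k \<beta> - monomial s (k - int (inversions \<beta>)) (sort \<beta>) \<in> I"
  using \<beta>
proof (induction "inversions \<beta>" arbitrary: \<beta> k)
  case 0
  then have "sort \<beta> = \<beta>" using inversions_eq_0_iff_sorted sorted_sort_id by metis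
  then have "monomial s (k - int (inversions \<beta>)) (sort \<beta>) = monomial s k \<beta>" using 0 by simp
  then show ?case using add_subgroupD(1)[OF two_sided_ideal_add_subgroup[OF W I(1)]] by (simp only: diff_self)
next
  case (Suc m)
  then obtain u i j v where \<beta>: "\<beta> = u @ [j, i] @ v" "i < j" using adjacent_inversion[of \<beta>] by auto
  define \<beta>' where "\<beta>' = u @ [i, j] @ v"
  have m: "inversions \<beta>' = m" using inversions_swap_adjacent[OF \<beta>(2), of u v] Suc(2) \<beta> by (simp add: \<beta>'_def)
  have words: "u \<in> words n" "v \<in> words n" "\<beta>' \<in> words n" and rel: "1 \<le> i" "j \<le> n"
    using Suc(3) \<beta> unfolding words_def \<beta>'_def by auto
  have sort: "sort \<beta>' = sort \<beta>" by (rule sort_eq_if_mset_eq) (simp add: \<beta>'_def \<beta>)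
  have "monomial 1 0 [i, j] - monomial 1 1 [j, i] \<in> I" using I(2) \<beta>(2) rel unfolding relations_eq by blast
  then have "sandwich s (k - 1) u v (monomial 1 0 [i, j] - monomial 1 1 [j, i]) \<in> I"
    using two_sided_ideal_sandwich_closed[OF W I(1)] words unfolding sandwich_closed_def by blast
  then have "monomial s (k - 1) \<beta>' - monomial s k \<beta> \<in> I"
    by (simp add: sandwich_diff sandwich_monomial \<beta>'_def \<beta>)
  moreover have "monomial s (k - 1) \<beta>' - monomial s (k - 1 - int m) (sort \<beta>') \<in> I"
    using Suc(1)[of \<beta>' "k - 1"] m words(3) by simp
  ultimately have "(monomial s (k - 1) \<beta>' - monomial s (k - 1 - int m) (sort \<beta>')) -
      (monomial s (k - 1) \<beta>' - monomial s k \<beta>) \<in> I"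
    using add_subgroupD(2)[OF two_sided_ideal_add_subgroup[OF W I(1)]] by blast
  then show ?case using sort by (simp add: Suc(2)[symmetric] algebra_simps)
qed

lemma monomial_reorder_mem:
  assumes W: "weight_family W" and I: "two_sided_ideal (weighted_l1 n W) I" "relations n \<subseteq> I"
    and \<beta>: "\<beta> \<in> words n" and mset: "mset \<beta>' = mset \<beta>"
    and k: "k - int (inversions \<beta>) = k' - int (inversions \<beta>')"
  shows "monomial s k \<beta> - monomial s k' \<beta>' \<in> I"
proof -
  have "set \<beta>' = set \<beta>" using mset by (metis set_mset_mset)
  then have \<beta>': "\<beta>' \<in> words n" using \<beta> by (simp add: words_def)
  have "(monomial s k \<beta> - monomial s (k - int (inversions \<beta>)) (sort \<beta>)) -
      (monomial s k' \<beta>' - monomial s (k' - int (inversions \<beta>')) (sort \<beta>')) \<in> I"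
    using monomial_sort_mem[OF W I \<beta>] monomial_sort_mem[OF W I \<beta>']
      add_subgroupD(2)[OF two_sided_ideal_add_subgroup[OF W I(1)]] by blast
  then show ?thesis using k sort_eq_if_mset_eq[OF mset] by simp
qed

section \<open>Reordering coefficient families into canonical words\<close>

definition canon_fibre :: "nat \<Rightarrow> nat list \<Rightarrow> nat list set" where
  "canon_fibre n \<gamma> = {\<beta> \<in> words n. canon n \<beta> = \<gamma>}"

definition reorder :: "nat \<Rightarrow> coeffs \<Rightarrow> coeffs" where
  "reorder n x = (\<lambda>K \<gamma>. \<Sum>\<beta>\<in>canon_fibre n \<gamma>. x K \<beta>)"

definition canon_bounded ::
    "nat \<Rightarrow> (int \<Rightarrow> nat list \<Rightarrow> real) set \<Rightarrow> (int \<Rightarrow> nat list \<Rightarrow> real) set \<Rightarrow> bool" where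
  "canon_bounded n W W' \<longleftrightarrow>
     (\<forall>w'\<in>W'. \<exists>w\<in>W. \<exists>C\<ge>0. \<forall>k \<beta>. \<beta> \<in> words n \<longrightarrow> w' k (canon n \<beta>) \<le> C * w k \<beta>)"

lemma finite_canon_fibre: "finite (canon_fibre n \<gamma>)"
proof (rule finite_subset)
  show "canon_fibre n \<gamma> \<subseteq> {\<beta>. set \<beta> \<subseteq> {1..n} \<and> length \<beta> = length \<gamma>}"
    unfolding canon_fibre_def using length_canon by (auto simp: words_def)
qed (rule finite_lists_length_eq, simp)

lemma reorder_add: "reorder n (x + y) = reorder n x + reorder n y"
  and reorder_diff: "reorder n (x - y) = reorder n x - reorder n y"
  and reorder_0 [simp]: "reorder n 0 = 0"
  unfolding reorder_def by (simp_all add: fun_eq_iff sum.distrib sum_subtractf)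

lemma reorder_monomial:
  assumes "\<beta> \<in> words n"
  shows "reorder n (monomial s k \<beta>) = monomial s k (canon n \<beta>)"
proof (intro ext)
  fix K \<gamma>
  have "reorder n (monomial s k \<beta>) K \<gamma> = (\<Sum>\<beta>'\<in>canon_fibre n \<gamma>. if \<beta> = \<beta>' then (if K = k then s else 0) else 0)"
    unfolding reorder_def by (rule sum.cong) (auto simp: monomial_def)
  also have "\<dots> = (if \<beta> \<in> canon_fibre n \<gamma> then (if K = k then s else 0) else 0)"
    by (rule sum.delta'[OF finite_canon_fibre])
  also have "\<dots> = monomial s k (canon n \<beta>) K \<gamma>"
    using assms by (auto simp: canon_fibre_def monomial_def)
  finally show "reorder n (monomial s k \<beta>) K \<gamma> = monomial s k (canon n \<beta>) K \<gamma>" .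
qed

lemma reorder_eq_series:
  assumes x: "x \<in> weighted_l1 n W"
  shows "reorder n x K \<gamma> = (\<Sum>\<^sub>\<infinity>p. monomial (x (fst p) (snd p)) (fst p) (canon n (snd p)) K \<gamma>)"
proof -
  let ?f = "\<lambda>p. monomial (x (fst p) (snd p)) (fst p) (canon n (snd p)) K \<gamma>"
  have "infsum ?f UNIV = infsum ?f (Pair K ` canon_fibre n \<gamma>)"
    by (rule infsum_cong_neutral)
       (use weighted_l1D[OF x] in \<open>auto simp: monomial_def canon_fibre_def image_iff\<close>)
  also have "\<dots> = (\<Sum>\<beta>\<in>canon_fibre n \<gamma>. ?f (K, \<beta>))"
    using finite_canon_fibre by (simp add: sum.reindex inj_on_def)
  also have "\<dots> = reorder n x K \<gamma>"
    unfolding reorder_def by (rule sum.cong) (auto simp: monomial_def canon_fibre_def)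
  finally show ?thesis by simp
qed

lemma
  assumes W: "weight_family W" and W': "weight_family W'" and x: "x \<in> weighted_l1 n W"
    and bounded: "canon_bounded n W W'"
  shows reorder_weighted_l1: "reorder n x \<in> weighted_l1 n W'"
    and wnorm_reorder_le: "\<And>w w' C. w \<in> W \<Longrightarrow> w' \<in> W' \<Longrightarrow> 0 \<le> C \<Longrightarrow>
      (\<And>k \<beta>. \<beta> \<in> words n \<Longrightarrow> w' k (canon n \<beta>) \<le> C * w k \<beta>) \<Longrightarrow> wnorm w' (reorder n x) \<le> C * wnorm w x"
proof -
  define t where "t p = monomial (x (fst p) (snd p)) (fst p) (canon n (snd p))" for p
  have t: "t p \<in> weighted_l1 n W'" for p
    unfolding t_def by (rule monomial_weighted_l1) (use weighted_l1D[OF x] canon_in_words in blast)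
  have t_le: "wnorm w' (t p) \<le> C * (case p of (k, \<alpha>) \<Rightarrow> norm (x k \<alpha>) * w k \<alpha>)"
    if "w \<in> W" "0 \<le> C" "\<And>k \<beta>. \<beta> \<in> words n \<Longrightarrow> w' k (canon n \<beta>) \<le> C * w k \<beta>" for w w' C p
  proof (cases "snd p \<in> words n")
    case True
    then have "norm (x (fst p) (snd p)) * w' (fst p) (canon n (snd p)) \<le>
        norm (x (fst p) (snd p)) * (C * w (fst p) (snd p))"
      using that(3) by (intro mult_left_mono) auto
    then show ?thesis by (simp add: t_def wnorm_monomial case_prod_unfold algebra_simps)
  next
    case False
    then show ?thesis using weighted_l1D[OF x False] by (simp add: t_def wnorm_monomial case_prod_unfold)
  qed
  have summable: "(\<lambda>p. wnorm w' (t p)) summable_on UNIV" if w': "w' \<in> W'" for w'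
  proof -
    obtain w C where wC: "w \<in> W" "0 \<le> C" "\<And>k \<beta>. \<beta> \<in> words n \<Longrightarrow> w' k (canon n \<beta>) \<le> C * w k \<beta>"
      using bounded w' unfolding canon_bounded_def by blast
    show ?thesis
      by (rule summable_on_comparison_test[OF summable_on_cmult_right[OF weighted_l1_summable[OF x wC(1)]]])
         (use t_le[OF wC] wnorm_nonneg[OF W' w'] in auto)
  qed
  have series: "reorder n x = (\<lambda>K \<gamma>. \<Sum>\<^sub>\<infinity>p. t p K \<gamma>)"
    by (simp add: fun_eq_iff t_def reorder_eq_series[OF x])
  show "reorder n x \<in> weighted_l1 n W'"
    unfolding series by (rule series_weighted_l1[OF W' t summable])
  fix w w' C assume w: "w \<in> W" "w' \<in> W'" "0 \<le> C"
    and C: "\<And>k \<beta>. \<beta> \<in> words n \<Longrightarrow> w' k (canon n \<beta>) \<le> C * w k \<beta>"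
  have "wnorm w' (reorder n x) \<le> (\<Sum>\<^sub>\<infinity>p. wnorm w' (t p))"
    unfolding series by (rule wnorm_series_le[OF W' t summable w(2)])
  also have "\<dots> \<le> (\<Sum>\<^sub>\<infinity>p. C * (case p of (k, \<alpha>) \<Rightarrow> norm (x k \<alpha>) * w k \<alpha>))"
    by (rule infsum_mono[OF summable[OF w(2)] summable_on_cmult_right[OF weighted_l1_summable[OF x w(1)]]])
       (rule t_le[OF w(1,3) C])
  also have "\<dots> = C * wnorm w x" unfolding wnorm_def by (rule infsum_cmult_right')
  finally show "wnorm w' (reorder n x) \<le> C * wnorm w x" .
qed

lemma continuous_map_reorder:
  assumes W: "weight_family W" and W': "weight_family W'"
    and bounded: "canon_bounded n W W'"
  shows "continuous_map (l1_topology n W) (l1_topology n W') (reorder n)"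
proof (rule continuous_map_seminorm_topology[OF seminorm_family_weighted_l1[OF W] seminorm_family_weighted_l1[OF W']])
  show "reorder n x \<in> weighted_l1 n W'" if "x \<in> weighted_l1 n W" for x
    by (rule reorder_weighted_l1[OF W W' that bounded])
  show "reorder n y - reorder n x = reorder n (y - x)" for x y by (simp add: reorder_diff)
  fix q assume "q \<in> wnorm ` W'"
  then obtain w' where w': "w' \<in> W'" "q = wnorm w'" by blast
  obtain w C where wC: "w \<in> W" "0 \<le> C" "\<forall>k \<beta>. \<beta> \<in> words n \<longrightarrow> w' k (canon n \<beta>) \<le> C * w k \<beta>"
    using bounded w'(1) unfolding canon_bounded_def by blast
  have "q (reorder n z) \<le> (C + 1) * wnorm w z" if z: "z \<in> weighted_l1 n W" for z
  proof -
    have "q (reorder n z) \<le> C * wnorm w z"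
      using wnorm_reorder_le[OF W W' z bounded wC(1) w'(1) wC(2)] wC(3) w'(2) by blast
    also have "\<dots> \<le> (C + 1) * wnorm w z" using wnorm_nonneg[OF W wC(1)] by (simp add: algebra_simps)
    finally show ?thesis .
  qed
  then show "\<exists>p\<in>wnorm ` W. \<exists>C>0. \<forall>z\<in>weighted_l1 n W. q (reorder n z) \<le> C * p z"
    using wC(1,2) by (intro bexI[of _ "wnorm w"] exI[of _ "C + 1"]) auto
qed

lemma diff_reorder_eq_series:
  assumes x: "x \<in> weighted_l1 n W"
  shows "x K \<gamma> - reorder n x K \<gamma> = (\<Sum>\<^sub>\<infinity>p. (monomial (x (fst p) (snd p)) (fst p) (snd p) -
     monomial (x (fst p) (snd p)) (fst p) (canon n (snd p))) K \<gamma>)"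
proof -
  let ?f = "\<lambda>p. monomial (x (fst p) (snd p)) (fst p) (snd p) K \<gamma>"
  let ?g = "\<lambda>p. monomial (x (fst p) (snd p)) (fst p) (canon n (snd p)) K \<gamma>"
  have "?f summable_on UNIV"
    by (rule finite_nonzero_values_imp_summable_on, rule finite_subset[of _ "{(K, \<gamma>)}"])
       (auto simp: monomial_def split: if_splits)
  moreover have "?g summable_on UNIV"
  proof (rule finite_nonzero_values_imp_summable_on, rule finite_subset)
    show "{p \<in> UNIV. ?g p \<noteq> 0} \<subseteq> Pair K ` canon_fibre n \<gamma>"
      using weighted_l1D[OF x] by (auto simp: monomial_def canon_fibre_def image_iff split: if_splits) blast
  qed (simp add: finite_canon_fibre)
  moreover have "infsum ?f UNIV = x K \<gamma>"
    by (subst infsum_eq_single[where k = "(K, \<gamma>)"]) (auto simp: monomial_def)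
  ultimately show ?thesis by (simp add: infsum_diff reorder_eq_series[OF x])
qed

lemma wnorm_monomial_diff_le:
  assumes W: "weight_family W" and w: "w \<in> W" and "\<beta> \<in> words n" "\<gamma> \<in> words n"
  shows "wnorm w (monomial s k \<beta> - monomial s k \<gamma>) \<le> norm s * w k \<beta> + norm s * w k \<gamma>"
proof -
  have m: "monomial s k \<beta> \<in> weighted_l1 n W" "monomial (- s) k \<gamma> \<in> weighted_l1 n W"
    using assms(3,4) by (simp_all add: monomial_weighted_l1)
  have "wnorm w (monomial s k \<beta> - monomial s k \<gamma>) = wnorm w (monomial s k \<beta> + monomial (- s) k \<gamma>)"
    by (rule arg_cong[where f = "wnorm w"]) (simp add: monomial_def fun_eq_iff)
  also have "\<dots> \<le> wnorm w (monomial s k \<beta>) + wnorm w (monomial (- s) k \<gamma>)"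
    by (rule wnorm_triangle[OF W m w])
  also have "\<dots> = norm s * w k \<beta> + norm s * w k \<gamma>" by (simp add: wnorm_monomial)
  finally show ?thesis .
qed

lemma diff_reorder_mem:
  assumes W: "weight_family W" and x: "x \<in> weighted_l1 n W"
    and bounded: "canon_bounded n W W"
    and I: "closedin (l1_topology n W) I" "two_sided_ideal (weighted_l1 n W) I" "relations n \<subseteq> I"
  shows "x - reorder n x \<in> I"
proof -
  define t where "t p = monomial (x (fst p) (snd p)) (fst p) (snd p) -
      monomial (x (fst p) (snd p)) (fst p) (canon n (snd p))" for p
  have I_subgroup: "add_subgroup I" by (rule two_sided_ideal_add_subgroup[OF W I(2)])
  have tI: "t p \<in> I" for p
  proof (cases "snd p \<in> words n")
    case True
    then show ?thesis
      unfolding t_def by (intro monomial_reorder_mem[OF W I(2,3)]) (simp_all add: mset_canon inversions_canon)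
  qed (simp add: t_def weighted_l1D[OF x] add_subgroupD(1)[OF I_subgroup])
  have I_subset: "I \<subseteq> weighted_l1 n W" using I(2) unfolding two_sided_ideal_def by blast
  have summable: "(\<lambda>p. wnorm w (t p)) summable_on UNIV" if w: "w \<in> W" for w
  proof -
    obtain w1 C where wC: "w1 \<in> W" "0 \<le> C" "\<And>k \<beta>. \<beta> \<in> words n \<Longrightarrow> w k (canon n \<beta>) \<le> C * w1 k \<beta>"
      using bounded w unfolding canon_bounded_def by blast
    have "wnorm w (t p) \<le> (case p of (k, \<alpha>) \<Rightarrow> norm (x k \<alpha>) * w k \<alpha>) + C * (case p of (k, \<alpha>) \<Rightarrow> norm (x k \<alpha>) * w1 k \<alpha>)"
      for p
    proof (cases "snd p \<in> words n")
      case True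
      let ?s = "x (fst p) (snd p)"
      have "norm ?s * w (fst p) (canon n (snd p)) \<le> norm ?s * (C * w1 (fst p) (snd p))"
        using wC(3)[OF True] by (rule mult_left_mono) simp
      then show ?thesis
        using wnorm_monomial_diff_le[OF W w True canon_in_words[OF True], of ?s "fst p"]
        by (simp add: t_def case_prod_unfold algebra_simps)
    next
      case False
      then show ?thesis
        using weighted_l1D[OF x False] wnorm_nonneg[OF W w] weight_nonneg[OF W w] by (simp add: t_def case_prod_unfold)
    qed
    then show ?thesis
      by (intro summable_on_comparison_test[OF summable_on_add[OF weighted_l1_summable[OF x w]
            summable_on_cmult_right[OF weighted_l1_summable[OF x wC(1)]]]] wnorm_nonneg[OF W w])
  qed
  have "x - reorder n x = (\<lambda>K \<gamma>. \<Sum>\<^sub>\<infinity>p. t p K \<gamma>)"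
    by (simp add: fun_eq_iff t_def diff_reorder_eq_series[OF x])
  also have "\<dots> \<in> I"
    using I(1) I_subset tI add_subgroupD(1,4)[OF I_subgroup] summable
    by (intro series_mem_closedin[OF W]) auto
  finally show ?thesis .
qed

definition weightsT :: "ereal \<Rightarrow> (int \<Rightarrow> nat list \<Rightarrow> real) set" where
  "weightsT r = {wT \<rho> R | \<rho> R. 0 < \<rho> \<and> ereal \<rho> < r \<and> 1 \<le> R}"

definition weightsF :: "ereal \<Rightarrow> (int \<Rightarrow> nat list \<Rightarrow> real) set" where
  "weightsF r = {wF \<rho> \<tau> R | \<rho> \<tau> R. 0 < \<rho> \<and> ereal \<rho> < r \<and> 1 \<le> \<tau> \<and> 1 \<le> R}"

lemma OT_alg_eq: "OT_alg n r = weighted_l1 n (weightsT r)"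
  and XT_eq: "XT n r = l1_topology n (weightsT r)"
  and IT_eq: "IT n r = closed_ideal_gen (weighted_l1 n (weightsT r)) (l1_topology n (weightsT r)) (relations n)"
proof -
  show OT: "OT_alg n r = weighted_l1 n (weightsT r)"
    unfolding OT_alg_def weighted_l1_def weightsT_def by blast
  have "normsT r = wnorm ` weightsT r" unfolding normsT_def weightsT_def by blast
  then show XT: "XT n r = l1_topology n (weightsT r)" unfolding XT_def OT by simp
  show "IT n r = closed_ideal_gen (weighted_l1 n (weightsT r)) (l1_topology n (weightsT r)) (relations n)"
    unfolding IT_def OT XT ..
qed

lemma OF_alg_eq: "OF_alg n r = weighted_l1 n (weightsF r)"
  and XF_eq: "XF n r = l1_topology n (weightsF r)"
  and IF_eq: "IF n r = closed_ideal_gen (weighted_l1 n (weightsF r)) (l1_topology n (weightsF r)) (relations n)"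
proof -
  show OF: "OF_alg n r = weighted_l1 n (weightsF r)"
    unfolding OF_alg_def weighted_l1_def weightsF_def by blast
  have "normsF r = wnorm ` weightsF r" unfolding normsF_def weightsF_def by blast
  then show XF: "XF n r = l1_topology n (weightsF r)" unfolding XF_def OF by simp
  show "IF n r = closed_ideal_gen (weighted_l1 n (weightsF r)) (l1_topology n (weightsF r)) (relations n)"
    unfolding IF_def OF XF ..
qed

lemma power_nat_abs_add_le: "(1::real) \<le> R \<Longrightarrow> R ^ nat \<bar>k + l\<bar> \<le> R ^ nat \<bar>k\<bar> * R ^ nat \<bar>l\<bar>"
  by (subst power_add[symmetric]) (rule power_increasing, auto)

lemma one_le_powr_switches: "1 \<le> (\<tau>::real) \<Longrightarrow> 1 \<le> \<tau> powr (of_int (switches \<alpha> + 1))"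
  by (rule ge_one_powr_ge_zero) (use switches_ge_minus_one[of \<alpha>] in auto)

lemma wT_le_wF: "1 \<le> \<tau> \<Longrightarrow> 0 < \<rho> \<Longrightarrow> 1 \<le> R \<Longrightarrow> wT \<rho> R k \<alpha> \<le> wF \<rho> \<tau> R k \<alpha>"
  using one_le_powr_switches[of \<tau> \<alpha>] by (simp add: wT_def wF_def)

lemma weightsT_nonempty: "0 < r \<Longrightarrow> weightsT r \<noteq> {}"
  using ereal_dense2[of 0 r] by (auto simp: zero_ereal_def weightsT_def)

lemma weightsF_nonempty: "0 < r \<Longrightarrow> weightsF r \<noteq> {}"
  using ereal_dense2[of 0 r] by (auto simp: zero_ereal_def weightsF_def)

lemma weight_family_weightsT:
  assumes r: "0 < r"
  shows "weight_family (weightsT r)"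
  unfolding weight_family_def
proof (intro conjI ballI allI weightsT_nonempty[OF r])
  fix w k \<alpha> assume "w \<in> weightsT r"
  then obtain \<rho> R where w: "w = wT \<rho> R" "0 < \<rho>" "1 \<le> R" unfolding weightsT_def by blast
  show "0 < w 0 \<alpha>" "w 0 \<alpha> \<le> w k \<alpha>" using w by (simp_all add: wT_def)
next
  fix w1 w2 assume "w1 \<in> weightsT r" "w2 \<in> weightsT r"
  then obtain \<rho>1 R1 \<rho>2 R2 where w: "w1 = wT \<rho>1 R1" "0 < \<rho>1" "ereal \<rho>1 < r" "1 \<le> R1"
     "w2 = wT \<rho>2 R2" "0 < \<rho>2" "ereal \<rho>2 < r" "1 \<le> R2" unfolding weightsT_def by blast
  have "wT (max \<rho>1 \<rho>2) (max R1 R2) \<in> weightsT r"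
    unfolding weightsT_def using w by (auto simp: max_def)
  then show "\<exists>w3\<in>weightsT r. \<forall>k \<alpha>. w1 k \<alpha> \<le> w3 k \<alpha> \<and> w2 k \<alpha> \<le> w3 k \<alpha>"
    using w by (intro bexI) (auto simp: wT_def intro!: mult_mono power_mono)
next
  fix w and k l :: int and \<alpha> \<beta> :: "nat list" assume "w \<in> weightsT r"
  then obtain \<rho> R where w: "w = wT \<rho> R" "0 < \<rho>" "1 \<le> R" unfolding weightsT_def by blast
  have "\<rho> ^ length (\<alpha> @ \<beta>) * R ^ nat \<bar>k + l\<bar> \<le> \<rho> ^ length (\<alpha> @ \<beta>) * (R ^ nat \<bar>k\<bar> * R ^ nat \<bar>l\<bar>)"
    using w power_nat_abs_add_le[of R k l] by (intro mult_left_mono) auto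
  then show "w (k + l) (\<alpha> @ \<beta>) \<le> w k \<alpha> * w l \<beta>"
    using w by (simp add: wT_def power_add algebra_simps)
qed

lemma weight_family_weightsF:
  assumes r: "0 < r"
  shows "weight_family (weightsF r)"
  unfolding weight_family_def
proof (intro conjI ballI allI weightsF_nonempty[OF r])
  fix w k \<alpha> assume "w \<in> weightsF r"
  then obtain \<rho> \<tau> R where w: "w = wF \<rho> \<tau> R" "0 < \<rho>" "1 \<le> \<tau>" "1 \<le> R" unfolding weightsF_def by blast
  show "0 < w 0 \<alpha>" "w 0 \<alpha> \<le> w k \<alpha>" using w one_le_powr_switches[of \<tau> \<alpha>] by (simp_all add: wF_def)
next
  fix w1 w2 assume "w1 \<in> weightsF r" "w2 \<in> weightsF r"
  then obtain \<rho>1 \<tau>1 R1 \<rho>2 \<tau>2 R2 where w: "w1 = wF \<rho>1 \<tau>1 R1" "0 < \<rho>1" "ereal \<rho>1 < r" "1 \<le> \<tau>1" "1 \<le> R1"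
     "w2 = wF \<rho>2 \<tau>2 R2" "0 < \<rho>2" "ereal \<rho>2 < r" "1 \<le> \<tau>2" "1 \<le> R2" unfolding weightsF_def by blast
  have "wF (max \<rho>1 \<rho>2) (max \<tau>1 \<tau>2) (max R1 R2) \<in> weightsF r"
    unfolding weightsF_def using w by (auto simp: max_def)
  moreover have "0 \<le> real_of_int (switches \<alpha> + 1)" for \<alpha> using switches_ge_minus_one[of \<alpha>] by simp
  ultimately show "\<exists>w3\<in>weightsF r. \<forall>k \<alpha>. w1 k \<alpha> \<le> w3 k \<alpha> \<and> w2 k \<alpha> \<le> w3 k \<alpha>"
    using w by (intro bexI) (auto simp: wF_def intro!: mult_mono power_mono powr_mono2)
next
  fix w and k l :: int and \<alpha> \<beta> :: "nat list" assume "w \<in> weightsF r"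
  then obtain \<rho> \<tau> R where w: "w = wF \<rho> \<tau> R" "0 < \<rho>" "1 \<le> \<tau>" "1 \<le> R" unfolding weightsF_def by blast
  define t where "t \<gamma> = \<tau> powr (of_int (switches \<gamma> + 1))" for \<gamma>
  have "t (\<alpha> @ \<beta>) \<le> \<tau> powr (of_int (switches \<alpha> + 1) + of_int (switches \<beta> + 1))"
    unfolding t_def using switches_append_le[of \<alpha> \<beta>] w(3) by (intro powr_mono) auto
  then have "t (\<alpha> @ \<beta>) \<le> t \<alpha> * t \<beta>" by (simp only: t_def powr_add)
  then have "\<rho> ^ length (\<alpha> @ \<beta>) * t (\<alpha> @ \<beta>) * R ^ nat \<bar>k + l\<bar> \<le>
      \<rho> ^ length (\<alpha> @ \<beta>) * (t \<alpha> * t \<beta>) * (R ^ nat \<bar>k\<bar> * R ^ nat \<bar>l\<bar>)"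
    using w power_nat_abs_add_le[of R k l] by (intro mult_mono) (auto simp: t_def)
  then show "w (k + l) (\<alpha> @ \<beta>) \<le> w k \<alpha> * w l \<beta>"
    unfolding w(1) wF_def t_def[symmetric] by (simp add: power_add mult_ac)
qed

text \<open>The canonical words have at most \<open>4n\<close> switches, so \<open>\<tau>\<^bsup>s(\<alpha>)+1\<^esup>\<close> stays bounded on them.\<close>

lemma wF_canon_le:
  assumes "0 < \<rho>" "1 \<le> \<tau>" "0 \<le> R" "\<beta> \<in> words n"
  shows "wF \<rho> \<tau> R k (canon n \<beta>) \<le> \<tau> powr (4 * real n + 1) * wT \<rho> R k \<beta>"
proof -
  have "\<tau> powr (of_int (switches (canon n \<beta>) + 1)) \<le> \<tau> powr (4 * real n + 1)"
    using switches_canon_le[OF assms(4)] assms(2) by (intro powr_mono) auto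
  then have "\<rho> ^ length \<beta> * R ^ nat \<bar>k\<bar> * \<tau> powr (of_int (switches (canon n \<beta>) + 1)) \<le>
      \<rho> ^ length \<beta> * R ^ nat \<bar>k\<bar> * \<tau> powr (4 * real n + 1)"
    using assms(1,3) by (intro mult_left_mono) auto
  then show ?thesis using length_canon[OF assms(4)] by (simp add: wF_def wT_def mult_ac)
qed

lemma canon_bounded_T_F: "canon_bounded n (weightsT r) (weightsF r)"
  unfolding canon_bounded_def
proof
  fix w' assume "w' \<in> weightsF r"
  then obtain \<rho> \<tau> R where w': "w' = wF \<rho> \<tau> R" "0 < \<rho>" "ereal \<rho> < r" "1 \<le> \<tau>" "1 \<le> R"
    unfolding weightsF_def by blast
  then have "wT \<rho> R \<in> weightsT r" unfolding weightsT_def by blast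
  then show "\<exists>w\<in>weightsT r. \<exists>C\<ge>0. \<forall>k \<beta>. \<beta> \<in> words n \<longrightarrow> w' k (canon n \<beta>) \<le> C * w k \<beta>"
    using w' wF_canon_le[OF w'(2,4)] by (intro bexI[of _ "wT \<rho> R"] exI[of _ "\<tau> powr (4 * real n + 1)"]) auto
qed

lemma canon_bounded_F_F: "canon_bounded n (weightsF r) (weightsF r)"
  unfolding canon_bounded_def
proof
  fix w' assume w'_in: "w' \<in> weightsF r"
  then obtain \<rho> \<tau> R where w': "w' = wF \<rho> \<tau> R" "0 < \<rho>" "1 \<le> \<tau>" "1 \<le> R"
    unfolding weightsF_def by blast
  have "wF \<rho> \<tau> R k (canon n \<beta>) \<le> \<tau> powr (4 * real n + 1) * wF \<rho> \<tau> R k \<beta>" if "\<beta> \<in> words n" for k \<beta>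
  proof -
    have "\<tau> powr (4 * real n + 1) * wT \<rho> R k \<beta> \<le> \<tau> powr (4 * real n + 1) * wF \<rho> \<tau> R k \<beta>"
      using wT_le_wF[OF w'(3,2,4)] by (rule mult_left_mono) simp
    with wF_canon_le[OF w'(2,3) _ that, of R k] w'(4) show ?thesis by simp
  qed
  then show "\<exists>w\<in>weightsF r. \<exists>C\<ge>0. \<forall>k \<beta>. \<beta> \<in> words n \<longrightarrow> w' k (canon n \<beta>) \<le> C * w k \<beta>"
    using w'_in w' by (intro bexI[of _ w'] exI[of _ "\<tau> powr (4 * real n + 1)"]) auto
qed

lemma canon_bounded_T_T: "canon_bounded n (weightsT r) (weightsT r)"
  unfolding canon_bounded_def
  using length_canon by (intro ballI bexI exI[of _ 1]) (auto simp: weightsT_def wT_def)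

lemma wT_dominated_by_weightsF:
  assumes "w' \<in> weightsT r"
  shows "\<exists>w\<in>weightsF r. \<forall>k \<alpha>. w' k \<alpha> \<le> w k \<alpha>"
proof -
  obtain \<rho> R where w': "w' = wT \<rho> R" "0 < \<rho>" "ereal \<rho> < r" "1 \<le> R"
    using assms unfolding weightsT_def by blast
  then have "wF \<rho> 1 R \<in> weightsF r" unfolding weightsF_def by fastforce
  moreover have "wT \<rho> R k \<alpha> \<le> wF \<rho> 1 R k \<alpha>" for k \<alpha> using wT_le_wF w'(2,4) by simp
  ultimately show ?thesis unfolding w'(1) by blast
qed

lemma
  assumes r: "0 < r"
  shows two_sided_ideal_IT: "two_sided_ideal (weighted_l1 n (weightsT r)) (IT n r)"
    and closedin_IT: "closedin (l1_topology n (weightsT r)) (IT n r)"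
    and relations_subset_IT: "relations n \<subseteq> IT n r"
    and IT_least: "\<And>J. relations n \<subseteq> J \<Longrightarrow> two_sided_ideal (weighted_l1 n (weightsT r)) J \<Longrightarrow>
      closedin (l1_topology n (weightsT r)) J \<Longrightarrow> IT n r \<subseteq> J"
proof -
  note W = weight_family_weightsT[OF r]
  note S = relations_weighted_l1[OF W]
  show "two_sided_ideal (weighted_l1 n (weightsT r)) (IT n r)"
    unfolding IT_eq by (rule two_sided_ideal_closed_ideal_gen[OF W S])
  show "closedin (l1_topology n (weightsT r)) (IT n r)"
    unfolding IT_eq by (rule closedin_closed_ideal_gen[OF W S])
  show "relations n \<subseteq> IT n r"
    unfolding IT_eq by (rule closed_ideal_gen_superset[OF W S])
  show "\<And>J. relations n \<subseteq> J \<Longrightarrow> two_sided_ideal (weighted_l1 n (weightsT r)) J \<Longrightarrow>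
      closedin (l1_topology n (weightsT r)) J \<Longrightarrow> IT n r \<subseteq> J"
    unfolding IT_eq by (rule closed_ideal_gen_least[OF W S])
qed

lemma
  assumes r: "0 < r"
  shows two_sided_ideal_IF: "two_sided_ideal (weighted_l1 n (weightsF r)) (IF n r)"
    and closedin_IF: "closedin (l1_topology n (weightsF r)) (IF n r)"
    and relations_subset_IF: "relations n \<subseteq> IF n r"
    and IF_least: "\<And>J. relations n \<subseteq> J \<Longrightarrow> two_sided_ideal (weighted_l1 n (weightsF r)) J \<Longrightarrow>
      closedin (l1_topology n (weightsF r)) J \<Longrightarrow> IF n r \<subseteq> J"
proof -
  note W = weight_family_weightsF[OF r]
  note S = relations_weighted_l1[OF W]
  show "two_sided_ideal (weighted_l1 n (weightsF r)) (IF n r)"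
    unfolding IF_eq by (rule two_sided_ideal_closed_ideal_gen[OF W S])
  show "closedin (l1_topology n (weightsF r)) (IF n r)"
    unfolding IF_eq by (rule closedin_closed_ideal_gen[OF W S])
  show "relations n \<subseteq> IF n r"
    unfolding IF_eq by (rule closed_ideal_gen_superset[OF W S])
  show "\<And>J. relations n \<subseteq> J \<Longrightarrow> two_sided_ideal (weighted_l1 n (weightsF r)) J \<Longrightarrow>
      closedin (l1_topology n (weightsF r)) J \<Longrightarrow> IF n r \<subseteq> J"
    unfolding IF_eq by (rule closed_ideal_gen_least[OF W S])
qed

lemma OF_alg_subset_OT_alg: "0 < r \<Longrightarrow> OF_alg n r \<subseteq> OT_alg n r"
  unfolding OF_alg_eq OT_alg_eq
  by (rule weighted_l1_subset[OF weight_family_weightsF weight_family_weightsT wT_dominated_by_weightsF])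

text \<open>\<open>I\<^sub>T \<inter> \<O>(\<C>\<^sup>\<times>, \<F>(\<D>\<^sub>r\<^sup>n))\<close> is a closed ideal of the smaller algebra containing the relations.\<close>

lemma IF_subset_IT:
  assumes r: "0 < r"
  shows "IF n r \<subseteq> IT n r"
proof -
  note WF = weight_family_weightsF[OF r] and WT = weight_family_weightsT[OF r]
  define J where "J = {x \<in> topspace (l1_topology n (weightsF r)). x \<in> IT n r}"
  have closed: "closedin (l1_topology n (weightsF r)) J"
    unfolding J_def
    by (rule closedin_continuous_map_preimage[OF continuous_map_weighted_l1_inclusion[OF WF WT wT_dominated_by_weightsF]
          closedin_IT[OF r]])
  have J: "J = weighted_l1 n (weightsF r) \<inter> IT n r" by (auto simp: J_def topspace_l1_topology[OF WF])
  have subset: "weighted_l1 n (weightsF r) \<subseteq> weighted_l1 n (weightsT r)"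
    using OF_alg_subset_OT_alg[OF r] by (simp add: OF_alg_eq OT_alg_eq)
  have "two_sided_ideal (weighted_l1 n (weightsF r)) J"
    using two_sided_ideal_IT[OF r] subset weighted_l1_zero weighted_l1_add[OF WF] cmul_weighted_l1[OF WF]
    unfolding J two_sided_ideal_def by (simp add: subset_iff)
  moreover have "relations n \<subseteq> J"
    using relations_weighted_l1[OF WF] relations_subset_IT[OF r] J by blast
  ultimately show ?thesis using IF_least[OF r _ _ closed] J by blast
qed

lemma diff_reorder_mem_IT: "0 < r \<Longrightarrow> c \<in> OT_alg n r \<Longrightarrow> c - reorder n c \<in> IT n r"
  unfolding OT_alg_eq
  by (rule diff_reorder_mem[OF weight_family_weightsT _ canon_bounded_T_T closedin_IT two_sided_ideal_IT
        relations_subset_IT])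

lemma diff_reorder_mem_IF: "0 < r \<Longrightarrow> x \<in> OF_alg n r \<Longrightarrow> x - reorder n x \<in> IF n r"
  unfolding OF_alg_eq
  by (rule diff_reorder_mem[OF weight_family_weightsF _ canon_bounded_F_F closedin_IF two_sided_ideal_IF
        relations_subset_IF])

text \<open>
  Injectivity: pulling \<open>I\<^sub>F\<close> back along all maps \<open>c \<mapsto> reorder (\<zeta>\<^sub>u c \<zeta>\<^sub>v)\<close> gives a closed
  ideal of the larger algebra that contains the relations, hence contains \<open>I\<^sub>T\<close>.\<close>

definition reorder_pullback :: "nat \<Rightarrow> ereal \<Rightarrow> coeffs set" where
  "reorder_pullback n r = {c \<in> OT_alg n r. \<forall>s k u v. u \<in> words n \<longrightarrow> v \<in> words n \<longrightarrow>
     reorder n (sandwich s k u v c) \<in> IF n r}"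

lemma closedin_reorder_pullback:
  assumes r: "0 < r"
  shows "closedin (l1_topology n (weightsT r)) (reorder_pullback n r)"
proof -
  note WT = weight_family_weightsT[OF r] and WF = weight_family_weightsF[OF r]
  let ?S = "{(s, k, u, v). u \<in> words n \<and> v \<in> words n} :: (complex \<times> int \<times> nat list \<times> nat list) set"
  let ?f = "\<lambda>(s, k, u, v). reorder n \<circ> sandwich s k u v"
  have "continuous_map (l1_topology n (weightsT r)) (l1_topology n (weightsF r)) (?f i)" if "i \<in> ?S" for i
    using that continuous_map_compose[OF continuous_map_sandwich[OF WT]
        continuous_map_reorder[OF WT WF canon_bounded_T_F]]
    by (auto simp: case_prod_unfold)
  then have "closedin (l1_topology n (weightsT r))
      {c \<in> topspace (l1_topology n (weightsT r)). \<forall>i\<in>?S. ?f i c \<in> IF n r}"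
    by (rule closedin_Inter_preimages[OF _ closedin_IF[OF r]])
  moreover have "{c \<in> topspace (l1_topology n (weightsT r)). \<forall>i\<in>?S. ?f i c \<in> IF n r} = reorder_pullback n r"
    by (auto simp: reorder_pullback_def topspace_l1_topology[OF WT] OT_alg_eq)
  ultimately show ?thesis by simp
qed

lemma two_sided_ideal_reorder_pullback:
  assumes r: "0 < r"
  shows "two_sided_ideal (weighted_l1 n (weightsT r)) (reorder_pullback n r)"
proof (rule two_sided_ideal_if_sandwich_closed[OF weight_family_weightsT[OF r] closedin_reorder_pullback[OF r]])
  note WT = weight_family_weightsT[OF r]
  note IF = add_subgroupD[OF two_sided_ideal_add_subgroup[OF weight_family_weightsF[OF r] two_sided_ideal_IF[OF r]]]
  show "reorder_pullback n r \<subseteq> weighted_l1 n (weightsT r)"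
    by (auto simp: reorder_pullback_def OT_alg_eq)
  show "0 \<in> reorder_pullback n r"
    using IF(1) weighted_l1_zero by (simp add: reorder_pullback_def OT_alg_eq)
  show "x + y \<in> reorder_pullback n r" if "x \<in> reorder_pullback n r" "y \<in> reorder_pullback n r" for x y
    using that IF(4) weighted_l1_add[OF WT]
    by (simp add: reorder_pullback_def OT_alg_eq sandwich_add reorder_add)
  show "sandwich_closed n (reorder_pullback n r)"
    unfolding sandwich_closed_def
  proof (intro allI impI)
    fix s k u v c assume uv: "u \<in> words n" "v \<in> words n" and c: "c \<in> reorder_pullback n r"
    then have "sandwich s k u v c \<in> OT_alg n r"
      using sandwich_weighted_l1[OF WT] by (simp add: reorder_pullback_def OT_alg_eq)
    moreover have "reorder n (sandwich s' k' u' v' (sandwich s k u v c)) \<in> IF n r"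
      if "u' \<in> words n" "v' \<in> words n" for s' k' u' v'
      using c that uv by (simp add: reorder_pullback_def sandwich_sandwich)
    ultimately show "sandwich s k u v c \<in> reorder_pullback n r" by (simp add: reorder_pullback_def)
  qed
qed

lemma relations_subset_reorder_pullback:
  assumes r: "0 < r"
  shows "relations n \<subseteq> reorder_pullback n r"
proof
  note WF = weight_family_weightsF[OF r]
  fix x assume "x \<in> relations n"
  then obtain i j where x: "x = monomial 1 0 [i, j] - monomial 1 1 [j, i]" "1 \<le> i" "i < j" "j \<le> n"
    unfolding relations_eq by blast
  have "x \<in> OT_alg n r"
    using relations_weighted_l1[OF weight_family_weightsT[OF r]] \<open>x \<in> relations n\<close> by (auto simp: OT_alg_eq)
  moreover have "reorder n (sandwich s k u v x) \<in> IF n r" if uv: "u \<in> words n" "v \<in> words n" for s k u v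
  proof -
    define \<beta> where "\<beta> = u @ [i, j] @ v"
    define \<beta>' where "\<beta>' = u @ [j, i] @ v"
    have words: "\<beta> \<in> words n" "\<beta>' \<in> words n" using uv x by (auto simp: \<beta>_def \<beta>'_def words_def)
    have "sandwich s k u v x = monomial s k \<beta> - monomial s (k + 1) \<beta>'"
      by (simp add: x(1) sandwich_diff sandwich_monomial \<beta>_def \<beta>'_def)
    then have "reorder n (sandwich s k u v x) = monomial s k (canon n \<beta>) - monomial s (k + 1) (canon n \<beta>')"
      by (simp add: reorder_diff reorder_monomial words)
    moreover have "mset (canon n \<beta>') = mset (canon n \<beta>)"
      using mset_canon[OF words(1)] mset_canon[OF words(2)] by (simp add: \<beta>_def \<beta>'_def)
    moreover have "inversions (canon n \<beta>') = Suc (inversions (canon n \<beta>))"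
      using inversions_canon[OF words(1)] inversions_canon[OF words(2)] inversions_swap_adjacent[OF x(3), of u v]
      by (simp add: \<beta>_def \<beta>'_def)
    ultimately show ?thesis
      using monomial_reorder_mem[OF WF two_sided_ideal_IF[OF r] relations_subset_IF[OF r] canon_in_words[OF words(1)]]
      by simp
  qed
  ultimately show "x \<in> reorder_pullback n r" by (simp add: reorder_pullback_def)
qed

lemma IT_Int_OF_alg_subset_IF:
  assumes r: "0 < r"
  shows "IT n r \<inter> OF_alg n r \<subseteq> IF n r"
proof
  fix x assume x: "x \<in> IT n r \<inter> OF_alg n r"
  have "IT n r \<subseteq> reorder_pullback n r"
    by (rule IT_least[OF r relations_subset_reorder_pullback two_sided_ideal_reorder_pullback
          closedin_reorder_pullback]) (use r in simp_all)
  then have "reorder n (sandwich 1 0 [] [] x) \<in> IF n r" using x by (auto simp: reorder_pullback_def)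
  then have "reorder n x \<in> IF n r" by (simp add: sandwich_one)
  moreover have "x - reorder n x \<in> IF n r" using diff_reorder_mem_IF[OF r] x by blast
  ultimately have "(x - reorder n x) + reorder n x \<in> IF n r"
    using add_subgroupD(4)[OF two_sided_ideal_add_subgroup[OF weight_family_weightsF[OF r] two_sided_ideal_IF[OF r]]]
    by blast
  then show "x \<in> IF n r" by simp
qed

theorem theorem8p8:
  fixes n :: nat and r :: ereal
  assumes "0 < r"
  shows "homeomorphic_map (Odef n r) (OdefT n r) (induced_map n r)"
proof -
  note WF = weight_family_weightsF[OF assms] and WT = weight_family_weightsT[OF assms]
  have "homeomorphic_map (quotient_top (OF_alg n r) (XF n r) (IF n r)) (quotient_top (OT_alg n r) (XT n r) (IT n r))
      (\<lambda>C. {y \<in> OT_alg n r. \<exists>x\<in>C. y - x \<in> IT n r})"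
  proof (rule homeomorphic_map_quotient_top_inclusion)
    show "topspace (XF n r) = OF_alg n r" "topspace (XT n r) = OT_alg n r"
      by (simp_all add: XF_eq OF_alg_eq XT_eq OT_alg_eq topspace_l1_topology WF WT)
    show "add_subgroup (IF n r)" "add_subgroup (IT n r)"
      by (rule two_sided_ideal_add_subgroup[OF WF two_sided_ideal_IF[OF assms]],
          rule two_sided_ideal_add_subgroup[OF WT two_sided_ideal_IT[OF assms]])
    show "IF n r \<subseteq> IT n r" "IT n r \<inter> OF_alg n r \<subseteq> IF n r"
      by (rule IF_subset_IT[OF assms], rule IT_Int_OF_alg_subset_IF[OF assms])
    show "x - y \<in> OF_alg n r" if "x \<in> OF_alg n r" "y \<in> OF_alg n r" for x y
      using weighted_l1_diff[OF WF] that by (simp add: OF_alg_eq)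
    show "continuous_map (XF n r) (XT n r) (\<lambda>x. x)"
      unfolding XF_eq XT_eq by (rule continuous_map_weighted_l1_inclusion[OF WF WT wT_dominated_by_weightsF])
    show "continuous_map (XT n r) (XF n r) (reorder n)"
      unfolding XF_eq XT_eq by (rule continuous_map_reorder[OF WT WF canon_bounded_T_F])
    show "c - reorder n c \<in> IT n r" if "c \<in> OT_alg n r" for c
      by (rule diff_reorder_mem_IT[OF assms that])
  qed
  then show ?thesis unfolding Odef_def OdefT_def induced_map_def .
qed

end
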